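(* Under the standing assumptions below (in particular Assumption A and $|\boldsymbol\beta(x)|>0$ for all $x\in\overline\Omega$), the functional $$|\!|\!|\boldsymbol\tau|\!|\!|_1:=\Big(\big\|\nabla\cdot\boldsymbol\tau+\tilde\gamma\,(\boldsymbol\beta\cdot\boldsymbol\tau)\big\|_{0}^2+\sum_{i=1}^{d-1}\big\|\boldsymbol\tau\cdot\boldsymbol\beta_\perp^{(i)}\big\|_{0}^2\Big)^{1/2}$$ is a norm on $H_{0,-}(\mathrm{div};\Omega)$. Here $\|\cdot\|_0$ is the $L^2(\Omega)$ norm.
   Context: Let $\Omega\subset\mathbb R^d$ ($d=2,3$) be a bounded polyhedral domain with Lipschitz boundary, with unit outward normal $\mathbf n$. Let $\gamma\in L^\infty(\Omega)$ and $\boldsymbol\beta\in[C^1(\overline\Omega)]^d$. The inflow boundary is $\Gamma_-=\{x\in\partial\Omega:\boldsymbol\beta(x)\cdot\mathbf n(x)<0\}$. Let $L^2(|\boldsymbol\beta\cdot\mathbf n|;\Gamma_-)$ be the set of measurable $v$ on $\partial\Omega$ with $\int_{\Gamma_-}|\boldsymbol\beta\cdot\mathbf n|v^2<\infty$, and $W=\{v\in L^2(\Omega):\nabla\cdot(\boldsymbol\beta v)\in L^2(\Omega)\}$. Assumption A: for every $f\in L^2(\Omega)$ and $g\in L^2(|\boldsymbol\beta\cdot\mathbf n|;\Gamma_-)$ the problem $\nabla\cdot(\boldsymbol\beta u)+\gamma u=f$ in $\Omega$, $u=g$ on $\Gamma_-$ has a unique solution $u\in W$. Define $H_{g,-}(\mathrm{div};\Omega)=\{\boldsymbol\tau\in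 H(\mathrm{div};\Omega):\boldsymbol\tau\cdot\mathbf n=(\boldsymbol\beta\cdot\mathbf n)g\text{ on }\Gamma_-\}$ and $H_{0,-}(\mathrm{div};\Omega)$ the case $g=0$ (normal traces understood in the usual $H(\mathrm{div})$ sense). Assume $|\boldsymbol\beta(x)|>0$ for all $x\in\overline\Omega$, put $\tilde\gamma=\gamma/|\boldsymbol\beta|^2$, and let $\boldsymbol\beta_\perp^{(1)},\dots,\boldsymbol\beta_\perp^{(d-1)}$ be measurable vector fields on $\Omega$ with $\boldsymbol\beta\cdot\boldsymbol\beta_\perp^{(i)}=0$ and $\boldsymbol\beta_\perp^{(i)}\cdot\boldsymbol\beta_\perp^{(j)}=\delta_{ij}$ pointwise (for $d=2$, e.g. $\boldsymbol\beta_\perp=(-\beta_2,\beta_1)/|\boldsymbol\beta|$). *)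

theory Defs
  imports "HOL-Analysis.Analysis"
begin

definition polyhedral_domain :: "'a::euclidean_space set \<Rightarrow> bool" where
  "polyhedral_domain \<Omega> \<longleftrightarrow> open \<Omega> \<and> connected \<Omega> \<and> \<Omega> \<noteq> {} \<and> bounded \<Omega> \<and>
     (\<exists>P. finite P \<and> (\<forall>p\<in>P. polytope p) \<and> closure \<Omega> = \<Union>P)"

text \<open>Lipschitz boundary: near every boundary point, in suitable orthonormal coordinates
(unit vector e as the last axis), the domain is the strict epigraph of a Lipschitz function
defined on the hyperplane orthogonal to e.\<close>
definition lipschitz_boundary :: "'a::euclidean_space set \<Rightarrow> bool" where
  "lipschitz_boundary \<Omega> \<longleftrightarrow>
     (\<forall>x\<in>frontier \<Omega>. \<exists>r>0. \<exists>e::'a. \<exists>h::'a \<Rightarrow> real. \<exists>L.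
        norm e = 1 \<and> L-lipschitz_on {y. y \<bullet> e = 0} h \<and>
        (\<forall>y\<in>ball x r. y \<in> \<Omega> \<longleftrightarrow> y \<bullet> e > h (y - (y \<bullet> e) *\<^sub>R e)))"

definition C1c :: "'a::euclidean_space set \<Rightarrow> ('a \<Rightarrow> real) \<Rightarrow> ('a \<Rightarrow> 'a) \<Rightarrow> bool" where
  "C1c S \<phi> d\<phi> \<longleftrightarrow> (\<forall>x. (\<phi> has_derivative (\<lambda>h. d\<phi> x \<bullet> h)) (at x)) \<and> continuous_on UNIV d\<phi> \<and>
     compact (closure {x. \<phi> x \<noteq> 0}) \<and> closure {x. \<phi> x \<noteq> 0} \<subseteq> S"

definition C1c_vec :: "'a::euclidean_space set \<Rightarrow> ('a \<Rightarrow> 'a) \<Rightarrow> ('a \<Rightarrow> 'a \<Rightarrow>\<^sub>L 'a) \<Rightarrow> bool" where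
  "C1c_vec S \<phi> D \<longleftrightarrow> (\<forall>x. (\<phi> has_derivative blinfun_apply (D x)) (at x)) \<and> continuous_on UNIV D \<and>
     compact (closure {x. \<phi> x \<noteq> 0}) \<and> closure {x. \<phi> x \<noteq> 0} \<subseteq> S"

definition divergence_of :: "('a::euclidean_space \<Rightarrow> 'a \<Rightarrow>\<^sub>L 'a) \<Rightarrow> 'a \<Rightarrow> real" where
  "divergence_of D x = (\<Sum>b\<in>Basis. blinfun_apply (D x) b \<bullet> b)"

text \<open>sigma is the surface measure of the boundary and n the outward unit normal,
characterised (uniquely, sigma-a.e.) by the Gauss--Green formula for C^1 compactly
supported vector fields.\<close>
definition surface_normal :: "'a::euclidean_space set \<Rightarrow> 'a measure \<Rightarrow> ('a \<Rightarrow> 'a) \<Rightarrow> bool" where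
  "surface_normal \<Omega> \<sigma> n \<longleftrightarrow>
     sets \<sigma> = sets borel \<and> finite_measure \<sigma> \<and> emeasure \<sigma> (UNIV - frontier \<Omega>) = 0 \<and>
     n \<in> borel_measurable borel \<and> (\<forall>x\<in>frontier \<Omega>. norm (n x) = 1) \<and>
     (\<forall>\<phi> D. C1c_vec UNIV \<phi> D \<longrightarrow>
        (LINT x|lebesgue_on \<Omega>. divergence_of D x) = (LINT x|\<sigma>. \<phi> x \<bullet> n x))"

definition inflow_boundary :: "'a::euclidean_space set \<Rightarrow> ('a \<Rightarrow> 'a) \<Rightarrow> ('a \<Rightarrow> 'a) \<Rightarrow> 'a set" where
  "inflow_boundary \<Omega> n \<beta> = {x\<in>frontier \<Omega>. \<beta> x \<bullet> n x < 0}"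

definition L2 :: "'a::euclidean_space set \<Rightarrow> ('a \<Rightarrow> real) \<Rightarrow> bool" where
  "L2 \<Omega> f \<longleftrightarrow> f \<in> borel_measurable (lebesgue_on \<Omega>) \<and> integrable (lebesgue_on \<Omega>) (\<lambda>x. (f x)\<^sup>2)"

definition L2vec :: "'a::euclidean_space set \<Rightarrow> ('a \<Rightarrow> 'a) \<Rightarrow> bool" where
  "L2vec \<Omega> f \<longleftrightarrow> f \<in> borel_measurable (lebesgue_on \<Omega>) \<and> integrable (lebesgue_on \<Omega>) (\<lambda>x. (norm (f x))\<^sup>2)"

definition Linfty :: "'a::euclidean_space set \<Rightarrow> ('a \<Rightarrow> real) \<Rightarrow> bool" where
  "Linfty \<Omega> f \<longleftrightarrow> f \<in> borel_measurable (lebesgue_on \<Omega>) \<and> (\<exists>C. AE x in lebesgue_on \<Omega>. \<bar>f x\<bar> \<le> C)"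

definition L2_inflow :: "'a::euclidean_space set \<Rightarrow> 'a measure \<Rightarrow> ('a \<Rightarrow> 'a) \<Rightarrow> ('a \<Rightarrow> 'a) \<Rightarrow> ('a \<Rightarrow> real) \<Rightarrow> bool" where
  "L2_inflow \<Omega> \<sigma> n \<beta> g \<longleftrightarrow> g \<in> borel_measurable \<sigma> \<and>
     integrable \<sigma> (\<lambda>x. indicator (inflow_boundary \<Omega> n \<beta>) x * \<bar>\<beta> x \<bullet> n x\<bar> * (g x)\<^sup>2)"

definition weak_div :: "'a::euclidean_space set \<Rightarrow> ('a \<Rightarrow> 'a) \<Rightarrow> ('a \<Rightarrow> real) \<Rightarrow> bool" where
  "weak_div \<Omega> \<tau> g \<longleftrightarrow> (\<forall>\<phi> d\<phi>. C1c \<Omega> \<phi> d\<phi> \<longrightarrow>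
      (LINT x|lebesgue_on \<Omega>. \<tau> x \<bullet> d\<phi> x) = - (LINT x|lebesgue_on \<Omega>. g x * \<phi> x))"

definition Hdiv :: "'a::euclidean_space set \<Rightarrow> ('a \<Rightarrow> 'a) \<Rightarrow> bool" where
  "Hdiv \<Omega> \<tau> \<longleftrightarrow> L2vec \<Omega> \<tau> \<and> (\<exists>g. L2 \<Omega> g \<and> weak_div \<Omega> \<tau> g)"

definition wdiv :: "'a::euclidean_space set \<Rightarrow> ('a \<Rightarrow> 'a) \<Rightarrow> 'a \<Rightarrow> real" where
  "wdiv \<Omega> \<tau> = (SOME g. L2 \<Omega> g \<and> weak_div \<Omega> \<tau> g)"

text \<open>H_{g,-}(div): the normal trace of tau equals (beta.n) g on Gamma_-, in the weak
(Green's formula) sense: tested against C^1 compactly supported functions on R^d whose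
boundary values vanish sigma-a.e. outside Gamma_-.\<close>
definition Hdiv_gminus :: "'a::euclidean_space set \<Rightarrow> 'a measure \<Rightarrow> ('a \<Rightarrow> 'a) \<Rightarrow> ('a \<Rightarrow> 'a)
     \<Rightarrow> ('a \<Rightarrow> real) \<Rightarrow> ('a \<Rightarrow> 'a) \<Rightarrow> bool" where
  "Hdiv_gminus \<Omega> \<sigma> n \<beta> g \<tau> \<longleftrightarrow> Hdiv \<Omega> \<tau> \<and>
     (\<forall>v dv. C1c UNIV v dv \<and> (AE x in \<sigma>. x \<notin> inflow_boundary \<Omega> n \<beta> \<longrightarrow> v x = 0) \<longrightarrow>
        (LINT x|lebesgue_on \<Omega>. \<tau> x \<bullet> dv x + v x * wdiv \<Omega> \<tau> x)
          = (LINT x|\<sigma>. indicator (inflow_boundary \<Omega> n \<beta>) x * (\<beta> x \<bullet> n x) * g x * v x))"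

abbreviation Hdiv_0minus where
  "Hdiv_0minus \<Omega> \<sigma> n \<beta> \<equiv> Hdiv_gminus \<Omega> \<sigma> n \<beta> (\<lambda>_. 0)"

definition W_space :: "'a::euclidean_space set \<Rightarrow> ('a \<Rightarrow> 'a) \<Rightarrow> ('a \<Rightarrow> real) \<Rightarrow> bool" where
  "W_space \<Omega> \<beta> v \<longleftrightarrow> L2 \<Omega> v \<and> Hdiv \<Omega> (\<lambda>x. v x *\<^sub>R \<beta> x)"

text \<open>u in W solves div(beta u) + gamma u = f in Omega, u = g on Gamma_- (boundary
condition in the weak Green's formula sense, as for H_{g,-}).\<close>
definition solves_transport :: "'a::euclidean_space set \<Rightarrow> 'a measure \<Rightarrow> ('a \<Rightarrow> 'a) \<Rightarrow> ('a \<Rightarrow> 'a)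
     \<Rightarrow> ('a \<Rightarrow> real) \<Rightarrow> ('a \<Rightarrow> real) \<Rightarrow> ('a \<Rightarrow> real) \<Rightarrow> ('a \<Rightarrow> real) \<Rightarrow> bool" where
  "solves_transport \<Omega> \<sigma> n \<beta> \<gamma> f g u \<longleftrightarrow> W_space \<Omega> \<beta> u \<and>
     (AE x in lebesgue_on \<Omega>. wdiv \<Omega> (\<lambda>y. u y *\<^sub>R \<beta> y) x + \<gamma> x * u x = f x) \<and>
     Hdiv_gminus \<Omega> \<sigma> n \<beta> g (\<lambda>x. u x *\<^sub>R \<beta> x)"

definition assumption_A :: "'a::euclidean_space set \<Rightarrow> 'a measure \<Rightarrow> ('a \<Rightarrow> 'a) \<Rightarrow> ('a \<Rightarrow> 'a)
     \<Rightarrow> ('a \<Rightarrow> real) \<Rightarrow> bool" where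
  "assumption_A \<Omega> \<sigma> n \<beta> \<gamma> \<longleftrightarrow>
     (\<forall>f g. L2 \<Omega> f \<and> L2_inflow \<Omega> \<sigma> n \<beta> g \<longrightarrow>
        (\<exists>u. solves_transport \<Omega> \<sigma> n \<beta> \<gamma> f g u) \<and>
        (\<forall>u1 u2. solves_transport \<Omega> \<sigma> n \<beta> \<gamma> f g u1 \<and> solves_transport \<Omega> \<sigma> n \<beta> \<gamma> f g u2
            \<longrightarrow> (AE x in lebesgue_on \<Omega>. u1 x = u2 x)))"

definition C1_closure :: "'a::euclidean_space set \<Rightarrow> ('a \<Rightarrow> 'a) \<Rightarrow> bool" where
  "C1_closure \<Omega> \<beta> \<longleftrightarrow> continuous_on (closure \<Omega>) \<beta> \<and>
     (\<exists>D::'a \<Rightarrow> 'a \<Rightarrow>\<^sub>L 'a. (\<forall>x\<in>\<Omega>. (\<beta> has_derivative blinfun_apply (D x)) (at x)) \<and>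
        uniformly_continuous_on \<Omega> D)"

definition triple_norm1 :: "'a::euclidean_space set \<Rightarrow> ('a \<Rightarrow> 'a) \<Rightarrow> ('a \<Rightarrow> real)
     \<Rightarrow> (nat \<Rightarrow> 'a \<Rightarrow> 'a) \<Rightarrow> ('a \<Rightarrow> 'a) \<Rightarrow> real" where
  "triple_norm1 \<Omega> \<beta> \<gamma> bp \<tau> = sqrt (
     (LINT x|lebesgue_on \<Omega>. (wdiv \<Omega> \<tau> x + (\<gamma> x / (norm (\<beta> x))\<^sup>2) * (\<beta> x \<bullet> \<tau> x))\<^sup>2)
     + (\<Sum>i\<in>{1..DIM('a) - 1}. (LINT x|lebesgue_on \<Omega>. (\<tau> x \<bullet> bp i x)\<^sup>2)))"

end

theory Submission imports Defs "HOL-Real_Asymp.Real_Asymp" begin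

text \<open>Absolute homogeneity and the triangle inequality are inherited componentwise from the
L^2 norm, since the weak divergence is linear (a consequence of its uniqueness, i.e. of the
fundamental lemma of the calculus of variations). For definiteness: if the functional vanishes,
then tau is orthogonal to every beta_perp^(i), hence tau = psi beta with
psi = (beta . tau) / |beta|^2, and the first term says div(beta psi) + gamma psi = 0.
Together with the boundary condition of H_{0,-}(div), psi solves the homogeneous transport
problem, so psi = 0 by the uniqueness part of Assumption A.\<close>

section \<open>Smooth approximations of box indicators\<close>

definition ramp :: "real \<Rightarrow> real" where "ramp t = max t 0"

definition smooth_step :: "real \<Rightarrow> real" where
  "smooth_step t = (ramp t)\<^sup>2 / (1 + (ramp t)\<^sup>2)"

definition smooth_step' :: "real \<Rightarrow> real" where
  "smooth_step' t = 2 * ramp t / (1 + (ramp t)\<^sup>2)\<^sup>2"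

lemma continuous_on_ramp: "continuous_on UNIV ramp"
  unfolding ramp_def by (intro continuous_intros)

lemma one_plus_ramp_square_pos: "1 + (ramp t)\<^sup>2 > 0"
  by (rule add_pos_nonneg[OF zero_less_one zero_le_power2])

lemma one_plus_ramp_square_nonzero: "1 + (ramp t)\<^sup>2 \<noteq> 0"
  using one_plus_ramp_square_pos[of t] by linarith

lemma ramp_square_has_derivative: "((\<lambda>t. (ramp t)\<^sup>2) has_real_derivative 2 * ramp x) (at x)"
proof (cases "x > 0")
  case True
  have "((\<lambda>t. t\<^sup>2) has_real_derivative 2 * ramp x) (at x)"
    using True by (auto intro!: derivative_eq_intros simp: ramp_def)
  then show ?thesis
    by (rule has_field_derivative_transform_within_open[where S="{0<..}"]) (use True in \<open>auto simp: ramp_def\<close>)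
next
  case False
  show ?thesis
  proof (cases "x < 0")
    case True
    have "((\<lambda>t. 0) has_real_derivative 2 * ramp x) (at x)" using True by (simp add: ramp_def)
    then show ?thesis
      by (rule has_field_derivative_transform_within_open[where S="{..<0}"]) (use True in \<open>auto simp: ramp_def\<close>)
  next
    case False
    then have x: "x = 0" using \<open>\<not> x > 0\<close> by auto
    have lim: "((\<lambda>y. ramp y) \<longlongrightarrow> ramp 0) (at 0)"
      using continuous_on_ramp by (simp add: continuous_on_def)
    have "\<forall>\<^sub>F y in at 0. ramp y = ((ramp y)\<^sup>2 - (ramp 0)\<^sup>2) / (y - 0)"
      unfolding eventually_at_filter
    proof (rule always_eventually, intro allI impI)
      fix y :: real assume "y \<noteq> 0"
      then show "ramp y = ((ramp y)\<^sup>2 - (ramp 0)\<^sup>2) / (y - 0)"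
        by (cases "y > 0") (simp_all add: ramp_def power2_eq_square)
    qed
    from Lim_transform_eventually[OF lim this]
    have "((\<lambda>y. ((ramp y)\<^sup>2 - (ramp x)\<^sup>2) / (y - x)) \<longlongrightarrow> 2 * ramp x) (at x)"
      using x by (simp add: ramp_def)
    then show ?thesis by (simp add: has_field_derivative_iff)
  qed
qed

lemma smooth_step_has_derivative: "(smooth_step has_real_derivative smooth_step' x) (at x)"
proof -
  have denom: "((\<lambda>t. 1 + (ramp t)\<^sup>2) has_real_derivative 0 + 2 * ramp x) (at x)"
    by (intro DERIV_add ramp_square_has_derivative DERIV_const)
  have eq: "smooth_step = (\<lambda>t. (ramp t)\<^sup>2 / (1 + (ramp t)\<^sup>2))"
    by (simp add: fun_eq_iff smooth_step_def)
  have num: "2 * ramp x * (1 + (ramp x)\<^sup>2) - (0 + 2 * ramp x) * (ramp x)\<^sup>2 = 2 * ramp x"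
    by (simp add: algebra_simps)
  show ?thesis
    unfolding eq
    by (rule DERIV_cong[OF DERIV_quotient[OF ramp_square_has_derivative denom one_plus_ramp_square_nonzero]])
       (unfold num, simp add: smooth_step'_def numeral_2_eq_2)
qed

lemma continuous_on_smooth_step': "continuous_on UNIV smooth_step'"
  unfolding smooth_step'_def
  by (intro continuous_intros continuous_on_ramp) (simp add: one_plus_ramp_square_nonzero)

lemma smooth_step_nonneg: "0 \<le> smooth_step t"
  by (simp add: smooth_step_def)

lemma smooth_step_le_1: "smooth_step t \<le> 1"
  using one_plus_ramp_square_pos[of t] by (simp add: smooth_step_def)

lemma smooth_step_nonpos: "t \<le> 0 \<Longrightarrow> smooth_step t = 0"
  by (simp add: smooth_step_def ramp_def)

lemma smooth_step_tendsto_1: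
  assumes "t > 0" shows "((\<lambda>n. smooth_step (real n * t)) \<longlongrightarrow> 1) sequentially"
proof -
  have "((\<lambda>u::real. u\<^sup>2 / (1 + u\<^sup>2)) \<longlongrightarrow> 1) at_top" by real_asymp
  moreover have "\<forall>\<^sub>F u in at_top. u\<^sup>2 / (1 + u\<^sup>2) = smooth_step u"
    unfolding eventually_at_top_linorder
    by (rule exI[of _ 1]) (simp add: smooth_step_def ramp_def)
  ultimately have lim: "(smooth_step \<longlongrightarrow> 1) at_top"
    by (rule Lim_transform_eventually)
  have "filterlim (\<lambda>n. t * real n) at_top sequentially"
    by (rule filterlim_tendsto_pos_mult_at_top[OF tendsto_const assms filterlim_real_sequentially])
  then have "filterlim (\<lambda>n. real n * t) at_top sequentially"
    by (simp add: mult.commute)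
  then show ?thesis by (rule filterlim_compose[OF lim])
qed

definition C1_scalar :: "('a::euclidean_space \<Rightarrow> real) \<Rightarrow> bool" where
  "C1_scalar f \<longleftrightarrow> (\<exists>D. (\<forall>x. (f has_derivative (\<lambda>h. D x \<bullet> h)) (at x)) \<and> continuous_on UNIV D)"

lemma C1_scalar_const: "C1_scalar (\<lambda>x::'a::euclidean_space. c)"
proof -
  have "((\<lambda>x. c) has_derivative (\<lambda>h. (0::'a) \<bullet> h)) (at x)" for x :: 'a
    by (rule has_derivative_eq_rhs[OF has_derivative_const]) (simp add: fun_eq_iff)
  then show ?thesis unfolding C1_scalar_def by (intro exI[of _ "\<lambda>x. 0"] conjI allI) (blast, simp)
qed

lemma C1_scalar_continuous: "C1_scalar f \<Longrightarrow> continuous_on UNIV f"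
  unfolding C1_scalar_def by (metis continuous_at_imp_continuous_on has_derivative_continuous)

lemma C1_scalar_mult:
  assumes "C1_scalar f" "C1_scalar g" shows "C1_scalar (\<lambda>x. f x * g x)"
proof -
  obtain Df where f: "\<And>x. (f has_derivative (\<lambda>h. Df x \<bullet> h)) (at x)" "continuous_on UNIV Df"
    using assms(1) unfolding C1_scalar_def by blast
  obtain Dg where g: "\<And>x. (g has_derivative (\<lambda>h. Dg x \<bullet> h)) (at x)" "continuous_on UNIV Dg"
    using assms(2) unfolding C1_scalar_def by blast
  have "continuous_on UNIV f" "continuous_on UNIV g" using assms C1_scalar_continuous by auto
  show ?thesis unfolding C1_scalar_def
  proof (intro exI conjI allI)
    fix x
    show "((\<lambda>x. f x * g x) has_derivative (\<lambda>h. (f x *\<^sub>R Dg x + g x *\<^sub>R Df x) \<bullet> h)) (at x)"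
      by (rule has_derivative_eq_rhs[OF has_derivative_mult[OF f(1) g(1)]])
         (simp add: fun_eq_iff algebra_simps)
    show "continuous_on UNIV (\<lambda>x. f x *\<^sub>R Dg x + g x *\<^sub>R Df x)"
      using f(2) g(2) \<open>continuous_on UNIV f\<close> \<open>continuous_on UNIV g\<close> by (intro continuous_intros) auto
  qed
qed

lemma C1_scalar_prod:
  "finite I \<Longrightarrow> (\<And>i. i \<in> I \<Longrightarrow> C1_scalar (f i)) \<Longrightarrow> C1_scalar (\<lambda>x. \<Prod>i\<in>I. f i x)"
  by (induction I rule: finite_induct) (simp_all add: C1_scalar_const C1_scalar_mult)

lemma C1_scalar_smooth_step_coordinate:
  "C1_scalar (\<lambda>x::'a::euclidean_space. smooth_step (k * (x \<bullet> i - c)))"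
  unfolding C1_scalar_def
proof (intro exI conjI allI)
  fix x :: 'a
  have "((\<lambda>x. k * (x \<bullet> i - c)) has_derivative (\<lambda>h. k * (h \<bullet> i))) (at x)"
    by (auto intro!: derivative_eq_intros)
  from DERIV_compose_FDERIV[OF smooth_step_has_derivative this]
  show "((\<lambda>x. smooth_step (k * (x \<bullet> i - c))) has_derivative
          (\<lambda>h. ((smooth_step' (k * (x \<bullet> i - c)) * k) *\<^sub>R i) \<bullet> h)) (at x)"
    by (rule has_derivative_eq_rhs) (simp add: fun_eq_iff algebra_simps inner_commute)
  show "continuous_on UNIV (\<lambda>x::'a. (smooth_step' (k * (x \<bullet> i - c)) * k) *\<^sub>R i)"
    by (intro continuous_intros continuous_on_compose2[OF continuous_on_smooth_step']) auto
qed

lemma C1_scalar_smooth_step_coordinate':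
  "C1_scalar (\<lambda>x::'a::euclidean_space. smooth_step (k * (c - x \<bullet> i)))"
proof -
  have "(\<lambda>x::'a. smooth_step (k * (c - x \<bullet> i))) = (\<lambda>x. smooth_step ((- k) * (x \<bullet> i - c)))"
    by (simp add: fun_eq_iff algebra_simps)
  then show ?thesis using C1_scalar_smooth_step_coordinate by metis
qed

definition box_bump :: "'a::euclidean_space \<Rightarrow> 'a \<Rightarrow> nat \<Rightarrow> 'a \<Rightarrow> real" where
  "box_bump a b n x =
     (\<Prod>i\<in>Basis. smooth_step (real n * (x \<bullet> i - a \<bullet> i)) * smooth_step (real n * (b \<bullet> i - x \<bullet> i)))"

lemma C1_scalar_box_bump: "C1_scalar (box_bump a b n)"
proof -
  have "C1_scalar (\<lambda>x. box_bump a b n x)" unfolding box_bump_def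
    by (intro C1_scalar_prod C1_scalar_mult C1_scalar_smooth_step_coordinate
        C1_scalar_smooth_step_coordinate') auto
  then show ?thesis by simp
qed

lemma box_bump_nonneg: "0 \<le> box_bump a b n x"
  unfolding box_bump_def by (intro prod_nonneg mult_nonneg_nonneg smooth_step_nonneg)

lemma box_bump_le_1: "box_bump a b n x \<le> 1"
  unfolding box_bump_def
  by (intro prod_le_1 conjI mult_nonneg_nonneg smooth_step_nonneg mult_le_one smooth_step_le_1)

lemma box_bump_nonzero_imp_mem_box:
  assumes "n > 0" "box_bump a b n x \<noteq> 0" shows "x \<in> box a b"
proof -
  have "\<forall>i\<in>Basis. smooth_step (real n * (x \<bullet> i - a \<bullet> i)) * smooth_step (real n * (b \<bullet> i - x \<bullet> i)) \<noteq> 0"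
    using assms(2) unfolding box_bump_def by auto
  then have "\<forall>i\<in>Basis. a \<bullet> i < x \<bullet> i \<and> x \<bullet> i < b \<bullet> i"
    using assms(1) by (metis diff_gt_0_iff_gt mult_eq_0_iff smooth_step_nonpos not_le
        of_nat_0_less_iff zero_less_mult_pos)
  then show ?thesis by (simp add: mem_box)
qed

lemma box_bump_tendsto_indicator:
  fixes a b x :: "'a::euclidean_space"
  shows "((\<lambda>n. box_bump a b n x) \<longlongrightarrow> indicator (box a b) x) sequentially"
proof (cases "x \<in> box a b")
  case True
  then have inside: "\<forall>i\<in>Basis. a \<bullet> i < x \<bullet> i \<and> x \<bullet> i < b \<bullet> i" by (simp add: mem_box)
  have "((\<lambda>n. box_bump a b n x) \<longlongrightarrow> (\<Prod>i\<in>(Basis::'a set). 1 * 1)) sequentially"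
    unfolding box_bump_def using inside
    by (intro tendsto_prod tendsto_mult smooth_step_tendsto_1) auto
  then show ?thesis using True by simp
next
  case False
  then obtain i where i: "i \<in> Basis" "x \<bullet> i \<le> a \<bullet> i \<or> b \<bullet> i \<le> x \<bullet> i"
    by (auto simp: mem_box not_less)
  have "box_bump a b n x = 0" for n
    unfolding box_bump_def
    by (rule prod_zero) (use i in \<open>auto intro!: bexI[of _ i] simp: smooth_step_nonpos mult_nonneg_nonpos\<close>)
  then show ?thesis using False by simp
qed

lemma C1c_box_bump:
  assumes "cbox a b \<subseteq> \<Omega>" "n > 0"
  shows "\<exists>d\<phi>. C1c \<Omega> (box_bump a b n) d\<phi>"
proof -
  obtain D where D: "\<And>x. (box_bump a b n has_derivative (\<lambda>h. D x \<bullet> h)) (at x)" "continuous_on UNIV D"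
    using C1_scalar_box_bump[of a b n] unfolding C1_scalar_def by blast
  have supp: "{x. box_bump a b n x \<noteq> 0} \<subseteq> box a b"
    using box_bump_nonzero_imp_mem_box[OF assms(2)] by blast
  have "closure {x. box_bump a b n x \<noteq> 0} \<subseteq> cbox a b"
    by (rule closure_minimal) (use supp box_subset_cbox in auto)
  moreover have "bounded {x. box_bump a b n x \<noteq> 0}"
    using supp bounded_box bounded_subset by blast
  ultimately have "C1c \<Omega> (box_bump a b n) D"
    unfolding C1c_def using D assms(1) by auto
  then show ?thesis by blast
qed

section \<open>The fundamental lemma of the calculus of variations\<close>

lemma integral_mult_indicator_box_eq_0:
  fixes \<Omega> :: "'a::euclidean_space set" and h :: "'a \<Rightarrow> real"
  assumes \<Omega>m: "\<Omega> \<in> sets lebesgue" and h: "integrable (lebesgue_on \<Omega>) h"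
    and orth: "\<And>\<phi> d\<phi>. C1c \<Omega> \<phi> d\<phi> \<Longrightarrow> (LINT x|lebesgue_on \<Omega>. h x * \<phi> x) = 0"
    and ab: "cbox a b \<subseteq> \<Omega>"
  shows "(LINT x|lebesgue_on \<Omega>. h x * indicator (box a b) x) = 0"
proof -
  have z: "(LINT x|lebesgue_on \<Omega>. h x * box_bump a b (Suc n) x) = 0" for n
    using C1c_box_bump[OF ab, of "Suc n"] orth by auto
  have hm: "h \<in> borel_measurable (lebesgue_on \<Omega>)" using h by auto
  have bm: "box_bump a b n \<in> borel_measurable (lebesgue_on \<Omega>)" for n
    by (rule continuous_imp_measurable_on_sets_lebesgue[OF continuous_on_subset[OF C1_scalar_continuous[OF C1_scalar_box_bump]] \<Omega>m]) auto
  have im: "(indicator (box a b) :: 'a \<Rightarrow> real) \<in> borel_measurable (lebesgue_on \<Omega>)"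
    by (rule measurable_restrict_space1) (simp add: borel_measurable_indicator)
  have "(\<lambda>n. LINT x|lebesgue_on \<Omega>. h x * box_bump a b (Suc n) x) \<longlonglongrightarrow> (LINT x|lebesgue_on \<Omega>. h x * indicator (box a b) x)"
  proof (rule integral_dominated_convergence[where w="\<lambda>x. \<bar>h x\<bar>"])
    show "(\<lambda>x. h x * indicator (box a b) x) \<in> borel_measurable (lebesgue_on \<Omega>)"
      using hm im by (rule borel_measurable_times)
    show "(\<lambda>x. h x * box_bump a b (Suc n) x) \<in> borel_measurable (lebesgue_on \<Omega>)" for n
      using hm bm by (rule borel_measurable_times)
    show "integrable (lebesgue_on \<Omega>) (\<lambda>x. \<bar>h x\<bar>)" using h by auto
    show "AE x in lebesgue_on \<Omega>. (\<lambda>n. h x * box_bump a b (Suc n) x) \<longlonglongrightarrow> h x * indicator (box a b) x"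
      by (intro AE_I2 tendsto_mult tendsto_const LIMSEQ_Suc[OF box_bump_tendsto_indicator])
    show "AE x in lebesgue_on \<Omega>. norm (h x * box_bump a b (Suc n) x) \<le> \<bar>h x\<bar>" for n
      by (intro AE_I2) (simp add: abs_mult box_bump_nonneg box_bump_le_1 mult_left_le)
  qed
  then show ?thesis using z by (simp add: LIMSEQ_const_iff)
qed

lemma emeasure_density_nonneg_integrable:
  fixes Q :: "'a::euclidean_space \<Rightarrow> real"
  assumes Qm: "Q \<in> borel_measurable lborel" and Qi: "integrable lborel Q" and Q0: "\<And>x. Q x \<ge> 0"
    and A: "A \<in> sets borel"
  shows "emeasure (density lborel (\<lambda>x. ennreal (Q x))) A = ennreal (LINT x|lborel. Q x * indicator A x)"
proof -
  have Am: "A \<in> sets lborel" using A by simp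
  have "emeasure (density lborel (\<lambda>x. ennreal (Q x))) A = (\<integral>\<^sup>+ x. ennreal (Q x) * indicator A x \<partial>lborel)"
    by (rule emeasure_density) (use Qm Am in auto)
  also have "\<dots> = (\<integral>\<^sup>+ x. ennreal (Q x * indicator A x) \<partial>lborel)"
    by (intro nn_integral_cong) (auto simp: indicator_def)
  also have "\<dots> = ennreal (LINT x|lborel. Q x * indicator A x)"
    by (rule nn_integral_eq_integral) (use integrable_real_mult_indicator[OF Am Qi] Q0 in auto)
  finally show ?thesis .
qed

text \<open>The densities of the positive and negative parts of G agree on the intersection-stable
generator of boxes, hence everywhere.\<close>
lemma AE_zero_if_box_integrals_zero_lborel:
  fixes G :: "'a::euclidean_space \<Rightarrow> real"
  assumes Gm: "G \<in> borel_measurable lborel" and G: "integrable lborel G"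
    and z: "\<And>a b. (LINT x|lborel. G x * indicator (box a b) x) = 0"
  shows "AE x in lborel. G x = 0"
proof -
  define P where "P x = max 0 (G x)" for x
  define N where "N x = max 0 (- G x)" for x
  have Pm: "P \<in> borel_measurable lborel" unfolding P_def using Gm by measurable
  have Nm: "N \<in> borel_measurable lborel" unfolding N_def using Gm by measurable
  have Pi: "integrable lborel P" unfolding P_def using G by (intro integrable_max) auto
  have Ni: "integrable lborel N" unfolding N_def using G by (intro integrable_max) auto
  note density_P = emeasure_density_nonneg_integrable[OF Pm Pi]
    and density_N = emeasure_density_nonneg_integrable[OF Nm Ni]
  define E where "E = range (\<lambda>(a, b). box a b :: 'a set)"
  have "density lborel (\<lambda>x. ennreal (P x)) = density lborel (\<lambda>x. ennreal (N x))"
  proof (rule measure_eqI_generator_eq[where E=E and \<Omega>=UNIV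
        and A="\<lambda>i. box (- (real i *\<^sub>R One)) (real i *\<^sub>R One)"])
    show "Int_stable E" unfolding E_def Int_stable_def by (auto simp: box_Int_box)
    show "E \<subseteq> Pow UNIV" by simp
    show "sets (density lborel (\<lambda>x. ennreal (P x))) = sigma_sets UNIV E"
      "sets (density lborel (\<lambda>x. ennreal (N x))) = sigma_sets UNIV E"
      unfolding E_def by (simp_all add: borel_eq_box)
    show "range (\<lambda>i. box (- (real i *\<^sub>R One)) (real i *\<^sub>R One)) \<subseteq> E" unfolding E_def by auto
    show "(\<Union>i. box (- (real i *\<^sub>R One)) (real i *\<^sub>R One)) = (UNIV :: 'a set)"
      by (rule UN_box_eq_UNIV)
    show "emeasure (density lborel (\<lambda>x. ennreal (P x))) (box (- (real i *\<^sub>R One)) (real i *\<^sub>R One)) \<noteq> \<infinity>" for i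
      using density_P P_def by simp
    fix X assume "X \<in> E"
    then obtain a b where X: "X = box a b" unfolding E_def by auto
    have "(\<lambda>x. G x * indicator X x) = (\<lambda>x. P x * indicator X x - N x * indicator X x)"
      by (auto simp: fun_eq_iff P_def N_def indicator_def max_def)
    then have "(LINT x|lborel. G x * indicator X x)
        = (LINT x|lborel. P x * indicator X x) - (LINT x|lborel. N x * indicator X x)"
      using Pi Ni X by (simp add: integrable_real_mult_indicator)
    then have "(LINT x|lborel. P x * indicator X x) = (LINT x|lborel. N x * indicator X x)"
      using z X by simp
    then show "emeasure (density lborel (\<lambda>x. ennreal (P x))) X = emeasure (density lborel (\<lambda>x. ennreal (N x))) X"
      using density_P density_N X by (simp add: P_def N_def)
  qed
  then have "AE x in lborel. ennreal (P x) = ennreal (N x)"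
    using sigma_finite_measure.density_unique_iff[OF sigma_finite_lborel, of "\<lambda>x. ennreal (P x)" "\<lambda>x. ennreal (N x)"]
      Pm Nm by auto
  then show ?thesis
    by eventually_elim (auto simp: P_def N_def max_def split: if_splits)
qed

lemma AE_zero_if_box_integrals_zero:
  fixes F :: "'a::euclidean_space \<Rightarrow> real"
  assumes F: "integrable lebesgue F"
    and z: "\<And>a b. (LINT x|lebesgue. F x * indicator (box a b) x) = 0"
  shows "AE x in lebesgue. F x = 0"
proof -
  have "F \<in> borel_measurable lebesgue" using F by auto
  then obtain G where Gm: "G \<in> borel_measurable lborel" and FG: "AE x in lborel. F x = G x"
    using completion_ex_borel_measurable_real by blast
  have FGc: "AE x in lebesgue. F x = G x" using FG by (rule AE_completion)
  have "integrable lebesgue G"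
    by (rule integrable_cong_AE_imp[OF F measurable_completion[OF Gm] FGc])
  then have Gi: "integrable lborel G" using integrable_completion[OF Gm] by simp
  have "(LINT x|lborel. G x * indicator (box a b) x) = 0" for a b
  proof -
    have m: "(\<lambda>x. G x * indicator (box a b) x) \<in> borel_measurable lborel" using Gm by measurable
    have m1: "(\<lambda>x. F x * indicator (box a b) x) \<in> borel_measurable lebesgue"
      using borel_measurable_integrable[OF F] measurable_completion[OF borel_measurable_indicator[of "box a b" lborel]]
      by (intro borel_measurable_times) auto
    have "(LINT x|lebesgue. F x * indicator (box a b) x) = (LINT x|lebesgue. G x * indicator (box a b) x)"
      by (intro integral_cong_AE m1 measurable_completion[OF m]) (use FGc in auto)
    also have "\<dots> = (LINT x|lborel. G x * indicator (box a b) x)"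
      by (rule integral_completion[OF m])
    finally show ?thesis using z by simp
  qed
  then have "AE x in lborel. G x = 0" by (rule AE_zero_if_box_integrals_zero_lborel[OF Gm Gi])
  then have "AE x in lebesgue. G x = 0" by (rule AE_completion)
  then show ?thesis using FGc by eventually_elim simp
qed

definition rational_vectors :: "'a::euclidean_space set" where "rational_vectors = {v. \<forall>i\<in>Basis. v \<bullet> i \<in> \<rat>}"

lemma countable_rational_vectors: "countable (rational_vectors :: 'a::euclidean_space set)"
proof -
  have "(rational_vectors :: 'a set) \<subseteq> (\<lambda>f. \<Sum>i\<in>Basis. f i *\<^sub>R i) ` (Basis \<rightarrow>\<^sub>E (\<rat> :: real set))"
  proof
    fix v :: 'a assume v: "v \<in> rational_vectors"
    have "v = (\<Sum>i\<in>Basis. (restrict (\<lambda>i. v \<bullet> i) Basis) i *\<^sub>R i)"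
      by (simp add: euclidean_representation)
    moreover have "restrict (\<lambda>i. v \<bullet> i) Basis \<in> Basis \<rightarrow>\<^sub>E \<rat>" using v by (auto simp: rational_vectors_def)
    ultimately show "v \<in> (\<lambda>f. \<Sum>i\<in>Basis. f i *\<^sub>R i) ` (Basis \<rightarrow>\<^sub>E (\<rat> :: real set))" by blast
  qed
  moreover have "countable ((Basis :: 'a set) \<rightarrow>\<^sub>E (\<rat> :: real set))"
    by (intro countable_PiE) (auto simp: countable_rat)
  ultimately show ?thesis by (meson countable_image countable_subset)
qed

lemma open_rational_cbox_neighbourhood:
  fixes \<Omega> :: "'a::euclidean_space set"
  assumes "open \<Omega>" "x \<in> \<Omega>"
  obtains c d where "c \<in> rational_vectors" "d \<in> rational_vectors" "cbox c d \<subseteq> \<Omega>" "x \<in> box c d"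
proof -
  obtain e where e: "e > 0" "ball x e \<subseteq> \<Omega>" using assms open_contains_ball by blast
  obtain c d where cd: "\<forall>i\<in>Basis. c \<bullet> i \<in> \<rat> \<and> d \<bullet> i \<in> \<rat>" "x \<in> box c d" "box c d \<subseteq> ball x (e/2)"
    using rational_boxes[of "e/2" x] e by auto
  have "box c d \<noteq> {}" using cd(2) by auto
  then have "cbox c d = closure (box c d)" by simp
  also have "\<dots> \<subseteq> cball x (e/2)" using closure_mono[OF cd(3)] e by simp
  also have "\<dots> \<subseteq> ball x e" using e by (auto simp: subset_eq)
  finally have "cbox c d \<subseteq> \<Omega>" using e by auto
  then show ?thesis using that cd unfolding rational_vectors_def by auto
qed

lemma AE_zero_on_box_if_subbox_integrals_zero:
  fixes H :: "'a::euclidean_space \<Rightarrow> real"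
  assumes H: "integrable lebesgue H"
    and z: "\<And>a b. cbox a b \<subseteq> cbox c d \<Longrightarrow> (LINT x|lebesgue. H x * indicator (box a b) x) = 0"
  shows "AE x in lebesgue. x \<in> box c d \<longrightarrow> H x = 0"
proof -
  define F where "F x = H x * indicator (box c d) x" for x
  have Fi: "integrable lebesgue F" unfolding F_def
    by (rule integrable_real_mult_indicator[OF _ H]) simp
  have "(LINT x|lebesgue. F x * indicator (box a b) x) = 0" for a b
  proof -
    define a' where "a' = (\<Sum>i\<in>Basis. max (a\<bullet>i) (c\<bullet>i) *\<^sub>R i)"
    define b' where "b' = (\<Sum>i\<in>Basis. min (b\<bullet>i) (d\<bullet>i) *\<^sub>R i)"
    have box_Int: "box a b \<inter> box c d = box a' b'" unfolding a'_def b'_def by (rule box_Int_box)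
    have "cbox a' b' \<subseteq> cbox c d"
      unfolding a'_def b'_def
      by (auto simp: mem_box inner_sum_left inner_Basis if_distrib cong: if_cong)
    moreover have "(\<lambda>x. F x * indicator (box a b) x) = (\<lambda>x. H x * indicator (box a' b') x)"
      unfolding F_def box_Int[symmetric] by (auto simp: fun_eq_iff indicator_def)
    ultimately show ?thesis using z by simp
  qed
  then have "AE x in lebesgue. F x = 0" by (rule AE_zero_if_box_integrals_zero[OF Fi])
  then show ?thesis by eventually_elim (auto simp: F_def)
qed

lemma AE_zero_if_orthogonal_to_C1c:
  fixes \<Omega> :: "'a::euclidean_space set" and h :: "'a \<Rightarrow> real"
  assumes op: "open \<Omega>" and h: "integrable (lebesgue_on \<Omega>) h"
    and orth: "\<And>\<phi> d\<phi>. C1c \<Omega> \<phi> d\<phi> \<Longrightarrow> (LINT x|lebesgue_on \<Omega>. h x * \<phi> x) = 0"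
  shows "AE x in lebesgue_on \<Omega>. h x = 0"
proof -
  have \<Omega>m: "\<Omega> \<in> sets lebesgue" using op by simp
  define H where "H x = indicator \<Omega> x * h x" for x
  have Hi: "integrable lebesgue H"
    using h unfolding H_def by (subst (asm) integrable_restrict_space) (use \<Omega>m in auto)
  have "(LINT x|lebesgue. H x * indicator (box a b) x) = 0" if ab: "cbox a b \<subseteq> \<Omega>" for a b
  proof -
    have "(LINT x|lebesgue. H x * indicator (box a b) x) = (LINT x|lebesgue_on \<Omega>. h x * indicator (box a b) x)"
      by (subst integral_restrict_space) (use \<Omega>m in \<open>auto simp: H_def mult.assoc\<close>)
    also have "\<dots> = 0" by (rule integral_mult_indicator_box_eq_0[OF \<Omega>m h orth ab])
    finally show ?thesis .
  qed
  then have cell: "AE x in lebesgue. x \<in> box c d \<longrightarrow> H x = 0" if "cbox c d \<subseteq> \<Omega>" for c d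
    using that by (intro AE_zero_on_box_if_subbox_integrals_zero[OF Hi]) auto
  define I where "I = {(c, d). c \<in> rational_vectors \<and> d \<in> rational_vectors \<and> cbox c d \<subseteq> \<Omega>}"
  have "countable I"
    unfolding I_def
    by (rule countable_subset[of _ "rational_vectors \<times> rational_vectors"]) (auto intro: countable_rational_vectors)
  then have "AE x in lebesgue. \<forall>(c, d)\<in>I. x \<in> box c d \<longrightarrow> H x = 0"
    using cell unfolding I_def by (intro AE_ball_countable') auto
  then have "AE x in lebesgue. x \<in> \<Omega> \<longrightarrow> h x = 0"
  proof eventually_elim
    case (elim x)
    show ?case
    proof
      assume "x \<in> \<Omega>"
      then obtain c d where "(c, d) \<in> I" "x \<in> box c d"
        using open_rational_cbox_neighbourhood[OF op] unfolding I_def by blast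
      then show "h x = 0" using elim \<open>x \<in> \<Omega>\<close> by (force simp: H_def)
    qed
  qed
  then show ?thesis by (subst AE_restrict_space_iff) (use \<Omega>m in auto)
qed

lemma abs_le_1_plus_square: "\<bar>t::real\<bar> \<le> 1 + t\<^sup>2"
proof (cases "\<bar>t\<bar> \<le> 1")
  case True then show ?thesis by (simp add: add_increasing2)
next
  case False
  then have "\<bar>t\<bar> * 1 \<le> \<bar>t\<bar> * \<bar>t\<bar>" by (intro mult_left_mono) auto
  then show ?thesis by (simp add: power2_eq_square)
qed

lemma AE_lebesgue_on_mem: "AE x in lebesgue_on \<Omega>. x \<in> \<Omega>"
  using AE_space[of "lebesgue_on \<Omega>"] by (simp add: space_restrict_space)

lemma L2_integrable:
  assumes fm: "finite_measure (lebesgue_on \<Omega>)" and f: "L2 \<Omega> f"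
  shows "integrable (lebesgue_on \<Omega>) f"
proof -
  interpret finite_measure "lebesgue_on \<Omega>" by (rule fm)
  show ?thesis
  proof (rule Bochner_Integration.integrable_bound)
    show "integrable (lebesgue_on \<Omega>) (\<lambda>x. 1 + (f x)\<^sup>2)" using f by (auto simp: L2_def)
    show "f \<in> borel_measurable (lebesgue_on \<Omega>)" using f by (simp add: L2_def)
    show "AE x in lebesgue_on \<Omega>. norm (f x) \<le> norm (1 + (f x)\<^sup>2)"
      by (intro AE_I2) (use abs_le_1_plus_square in simp)
  qed
qed

lemma L2_add:
  assumes f: "L2 \<Omega> f" and g: "L2 \<Omega> g"
  shows "L2 \<Omega> (\<lambda>x. f x + g x)"
  unfolding L2_def
proof
  show m: "(\<lambda>x. f x + g x) \<in> borel_measurable (lebesgue_on \<Omega>)" using f g by (auto simp: L2_def)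
  show "integrable (lebesgue_on \<Omega>) (\<lambda>x. (f x + g x)\<^sup>2)"
  proof (rule Bochner_Integration.integrable_bound)
    show "integrable (lebesgue_on \<Omega>) (\<lambda>x. 2 * (f x)\<^sup>2 + 2 * (g x)\<^sup>2)" using f g by (auto simp: L2_def)
    show "(\<lambda>x. (f x + g x)\<^sup>2) \<in> borel_measurable (lebesgue_on \<Omega>)" using m by measurable
    have "(a + b)\<^sup>2 \<le> 2 * a\<^sup>2 + 2 * b\<^sup>2" for a b :: real
      using sum_squares_ge_zero[of "a - b" 0] by (simp add: power2_eq_square algebra_simps)
    then show "AE x in lebesgue_on \<Omega>. norm ((f x + g x)\<^sup>2) \<le> norm (2 * (f x)\<^sup>2 + 2 * (g x)\<^sup>2)"
      by (intro AE_I2) simp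
  qed
qed

lemma L2_mult_bounded:
  assumes f: "L2 \<Omega> f" and c: "c \<in> borel_measurable (lebesgue_on \<Omega>)"
    and cb: "AE x in lebesgue_on \<Omega>. \<bar>c x\<bar> \<le> C"
  shows "L2 \<Omega> (\<lambda>x. c x * f x)"
  unfolding L2_def
proof
  show m: "(\<lambda>x. c x * f x) \<in> borel_measurable (lebesgue_on \<Omega>)" using f c by (auto simp: L2_def)
  show "integrable (lebesgue_on \<Omega>) (\<lambda>x. (c x * f x)\<^sup>2)"
  proof (rule Bochner_Integration.integrable_bound)
    show "integrable (lebesgue_on \<Omega>) (\<lambda>x. C\<^sup>2 * (f x)\<^sup>2)" using f by (auto simp: L2_def)
    show "(\<lambda>x. (c x * f x)\<^sup>2) \<in> borel_measurable (lebesgue_on \<Omega>)" using m by measurable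
    show "AE x in lebesgue_on \<Omega>. norm ((c x * f x)\<^sup>2) \<le> norm (C\<^sup>2 * (f x)\<^sup>2)"
      using cb
    proof eventually_elim
      case (elim x)
      have "(c x)\<^sup>2 \<le> C\<^sup>2" using elim using power_mono[OF elim abs_ge_zero, of 2] by simp
      then show ?case by (simp add: power_mult_distrib mult_right_mono)
    qed
  qed
qed

lemma L2_cmult: "L2 \<Omega> f \<Longrightarrow> L2 \<Omega> (\<lambda>x. c * f x)"
  using L2_mult_bounded[of \<Omega> f "\<lambda>_. c" "\<bar>c\<bar>"] by auto

lemma L2_zero: "L2 \<Omega> (\<lambda>x. 0)" by (simp add: L2_def)

lemma integral_square_cong_AE:
  assumes "L2 \<Omega> f" "L2 \<Omega> g" "AE x in lebesgue_on \<Omega>. f x = g x"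
  shows "(LINT x|lebesgue_on \<Omega>. (f x)\<^sup>2) = (LINT x|lebesgue_on \<Omega>. (g x)\<^sup>2)"
proof (rule integral_cong_AE)
  have [measurable]: "f \<in> borel_measurable (lebesgue_on \<Omega>)" "g \<in> borel_measurable (lebesgue_on \<Omega>)"
    using assms(1,2) by (simp_all add: L2_def)
  show "(\<lambda>x. (f x)\<^sup>2) \<in> borel_measurable (lebesgue_on \<Omega>)" "(\<lambda>x. (g x)\<^sup>2) \<in> borel_measurable (lebesgue_on \<Omega>)"
    by measurable
  show "AE x in lebesgue_on \<Omega>. (f x)\<^sup>2 = (g x)\<^sup>2" using assms(3) by eventually_elim simp
qed

lemma L2_AE_zero:
  assumes "L2 \<Omega> f" "(LINT x|lebesgue_on \<Omega>. (f x)\<^sup>2) = 0"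
  shows "AE x in lebesgue_on \<Omega>. f x = 0"
  using assms integral_nonneg_eq_0_iff_AE[of "lebesgue_on \<Omega>" "\<lambda>x. (f x)\<^sup>2"] by (simp add: L2_def)

lemma L2_inner_bounded:
  assumes t: "L2vec \<Omega> t" and b: "b \<in> borel_measurable (lebesgue_on \<Omega>)"
    and bb: "AE x in lebesgue_on \<Omega>. norm (b x) \<le> C"
  shows "L2 \<Omega> (\<lambda>x. b x \<bullet> t x)"
  unfolding L2_def
proof
  show m: "(\<lambda>x. b x \<bullet> t x) \<in> borel_measurable (lebesgue_on \<Omega>)" using t b by (auto simp: L2vec_def)
  show "integrable (lebesgue_on \<Omega>) (\<lambda>x. (b x \<bullet> t x)\<^sup>2)"
  proof (rule Bochner_Integration.integrable_bound)
    show "integrable (lebesgue_on \<Omega>) (\<lambda>x. C\<^sup>2 * (norm (t x))\<^sup>2)" using t by (auto simp: L2vec_def)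
    show "(\<lambda>x. (b x \<bullet> t x)\<^sup>2) \<in> borel_measurable (lebesgue_on \<Omega>)" using m by measurable
    show "AE x in lebesgue_on \<Omega>. norm ((b x \<bullet> t x)\<^sup>2) \<le> norm (C\<^sup>2 * (norm (t x))\<^sup>2)"
      using bb
    proof eventually_elim
      case (elim x)
      have "\<bar>b x \<bullet> t x\<bar> \<le> norm (b x) * norm (t x)" by (rule Cauchy_Schwarz_ineq2)
      also have "\<dots> \<le> C * norm (t x)" using elim by (simp add: mult_right_mono)
      finally have "(b x \<bullet> t x)\<^sup>2 \<le> (C * norm (t x))\<^sup>2"
        using power_mono[OF _ abs_ge_zero, of "b x \<bullet> t x" "C * norm (t x)" 2] by simp
      then show ?case by (simp add: power_mult_distrib)
    qed
  qed
qed

lemma integrable_mult_L2: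
  assumes f: "L2 \<Omega> f" and g: "L2 \<Omega> g"
  shows "integrable (lebesgue_on \<Omega>) (\<lambda>x. f x * g x)"
proof (rule Bochner_Integration.integrable_bound)
  show "integrable (lebesgue_on \<Omega>) (\<lambda>x. (f x)\<^sup>2 + (g x)\<^sup>2)" using f g by (auto simp: L2_def)
  show "(\<lambda>x. f x * g x) \<in> borel_measurable (lebesgue_on \<Omega>)" using f g by (auto simp: L2_def)
  have "\<bar>a * b\<bar> \<le> a\<^sup>2 + b\<^sup>2" for a b :: real
  proof -
    have "0 \<le> (\<bar>a\<bar> - \<bar>b\<bar>)\<^sup>2" by simp
    then have h1: "2 * \<bar>a\<bar> * \<bar>b\<bar> \<le> a\<^sup>2 + b\<^sup>2" by (simp add: power2_diff)
    have "0 \<le> \<bar>a\<bar> * \<bar>b\<bar>" by simp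
    then show ?thesis using h1 abs_mult[of a b] by linarith
  qed
  then show "AE x in lebesgue_on \<Omega>. norm (f x * g x) \<le> norm ((f x)\<^sup>2 + (g x)\<^sup>2)"
    by (intro AE_I2) simp
qed

lemma L2vec_add:
  assumes f: "L2vec \<Omega> f" and g: "L2vec \<Omega> g"
  shows "L2vec \<Omega> (\<lambda>x. f x + g x)"
  unfolding L2vec_def
proof
  show m: "(\<lambda>x. f x + g x) \<in> borel_measurable (lebesgue_on \<Omega>)" using f g by (auto simp: L2vec_def)
  show "integrable (lebesgue_on \<Omega>) (\<lambda>x. (norm (f x + g x))\<^sup>2)"
  proof (rule Bochner_Integration.integrable_bound)
    show "integrable (lebesgue_on \<Omega>) (\<lambda>x. 2 * (norm (f x))\<^sup>2 + 2 * (norm (g x))\<^sup>2)" using f g by (auto simp: L2vec_def)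
    show "(\<lambda>x. (norm (f x + g x))\<^sup>2) \<in> borel_measurable (lebesgue_on \<Omega>)" using m by measurable
    have "(norm (a + b))\<^sup>2 \<le> 2 * (norm a)\<^sup>2 + 2 * (norm b)\<^sup>2" for a b :: 'a
    proof -
      have "(norm (a + b))\<^sup>2 \<le> (norm a + norm b)\<^sup>2"
        by (simp add: norm_triangle_ineq power_mono)
      also have "\<dots> \<le> 2 * (norm a)\<^sup>2 + 2 * (norm b)\<^sup>2"
        using sum_squares_ge_zero[of "norm a - norm b" 0] by (simp add: power2_eq_square algebra_simps)
      finally show ?thesis .
    qed
    then show "AE x in lebesgue_on \<Omega>. norm ((norm (f x + g x))\<^sup>2) \<le> norm (2 * (norm (f x))\<^sup>2 + 2 * (norm (g x))\<^sup>2)"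
      by (intro AE_I2) simp
  qed
qed

lemma L2vec_scaleR:
  assumes f: "L2vec \<Omega> f" shows "L2vec \<Omega> (\<lambda>x. c *\<^sub>R f x)"
  using f unfolding L2vec_def by (auto simp: power_mult_distrib)

lemma continuous_on_closure_norm_bounded:
  fixes \<Omega> :: "'a::euclidean_space set" and f :: "'a \<Rightarrow> 'b::real_normed_vector"
  assumes "continuous_on (closure \<Omega>) f" "bounded \<Omega>"
  shows "\<exists>C. \<forall>x\<in>\<Omega>. norm (f x) \<le> C"
proof -
  have "compact (f ` closure \<Omega>)" using assms by (intro compact_continuous_image) auto
  then obtain C where "\<forall>y\<in>f ` closure \<Omega>. norm y \<le> C" using compact_imp_bounded bounded_iff by metis
  then show ?thesis using closure_subset by blast
qed

section \<open>Weak divergence\<close>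

lemma finite_measure_lebesgue_on_open_bounded:
  fixes \<Omega> :: "'a::euclidean_space set"
  assumes "open \<Omega>" "bounded \<Omega>"
  shows "finite_measure (lebesgue_on \<Omega>)"
  using assms by (intro finite_measure_lebesgue_on bounded_set_imp_lmeasurable) auto

lemma C1c_continuous:
  assumes "C1c S \<phi> d\<phi>" shows "continuous_on UNIV \<phi>" "continuous_on UNIV d\<phi>"
  using assms unfolding C1c_def
  by (auto intro!: continuous_at_imp_continuous_on has_derivative_continuous)

lemma continuous_imp_measurable_lebesgue_on:
  fixes f :: "'a::euclidean_space \<Rightarrow> 'b::euclidean_space"
  assumes "continuous_on UNIV f" "\<Omega> \<in> sets lebesgue"
  shows "f \<in> borel_measurable (lebesgue_on \<Omega>)"
  by (rule continuous_imp_measurable_on_sets_lebesgue[OF continuous_on_subset[OF assms(1)] assms(2)]) auto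

lemma continuous_AE_norm_bounded:
  fixes f :: "'a::euclidean_space \<Rightarrow> 'b::real_normed_vector"
  assumes "continuous_on UNIV f" "bounded \<Omega>"
  shows "\<exists>C. AE x in lebesgue_on \<Omega>. norm (f x) \<le> C"
proof -
  obtain C where "\<forall>x\<in>\<Omega>. norm (f x) \<le> C"
    using continuous_on_closure_norm_bounded[OF continuous_on_subset[OF assms(1)] assms(2)] by auto
  then show ?thesis using AE_lebesgue_on_mem[of \<Omega>] by (intro exI[of _ C]) (auto elim: eventually_mono)
qed

lemma integrable_inner_continuous:
  fixes \<Omega> :: "'a::euclidean_space set"
  assumes "open \<Omega>" "bounded \<Omega>" "L2vec \<Omega> \<tau>" "continuous_on UNIV d"
  shows "integrable (lebesgue_on \<Omega>) (\<lambda>x. \<tau> x \<bullet> d x)"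
proof -
  obtain C where C: "AE x in lebesgue_on \<Omega>. norm (d x) \<le> C" using continuous_AE_norm_bounded[OF assms(4,2)] by blast
  have "L2 \<Omega> (\<lambda>x. d x \<bullet> \<tau> x)"
    by (rule L2_inner_bounded[OF assms(3) continuous_imp_measurable_lebesgue_on[OF assms(4)] C]) (use assms(1) in auto)
  then have "integrable (lebesgue_on \<Omega>) (\<lambda>x. d x \<bullet> \<tau> x)"
    by (rule L2_integrable[OF finite_measure_lebesgue_on_open_bounded[OF assms(1,2)]])
  then show ?thesis by (simp add: inner_commute)
qed

lemma L2_mult_continuous:
  fixes \<Omega> :: "'a::euclidean_space set"
  assumes "open \<Omega>" "bounded \<Omega>" "L2 \<Omega> g" "continuous_on UNIV \<phi>"
  shows "L2 \<Omega> (\<lambda>x. \<phi> x * g x)"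
proof -
  obtain C where C: "AE x in lebesgue_on \<Omega>. norm (\<phi> x) \<le> C" using continuous_AE_norm_bounded[OF assms(4,2)] by blast
  show ?thesis
    by (rule L2_mult_bounded[OF assms(3) continuous_imp_measurable_lebesgue_on[OF assms(4)]]) (use C assms(1) in auto)
qed

lemma integrable_mult_continuous:
  fixes \<Omega> :: "'a::euclidean_space set"
  assumes "open \<Omega>" "bounded \<Omega>" "L2 \<Omega> g" "continuous_on UNIV \<phi>"
  shows "integrable (lebesgue_on \<Omega>) (\<lambda>x. g x * \<phi> x)"
  using L2_integrable[OF finite_measure_lebesgue_on_open_bounded[OF assms(1,2)] L2_mult_continuous[OF assms]] by (simp add: mult.commute)

lemma wdiv_weak_div: assumes "Hdiv \<Omega> \<tau>" shows "L2 \<Omega> (wdiv \<Omega> \<tau>) \<and> weak_div \<Omega> \<tau> (wdiv \<Omega> \<tau>)"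
proof -
  obtain g where "L2 \<Omega> g \<and> weak_div \<Omega> \<tau> g" using assms unfolding Hdiv_def by blast
  then show ?thesis unfolding wdiv_def by (rule someI[where P="\<lambda>g. L2 \<Omega> g \<and> weak_div \<Omega> \<tau> g"])
qed

lemma weak_div_unique_AE:
  fixes \<Omega> :: "'a::euclidean_space set"
  assumes op: "open \<Omega>" and bd: "bounded \<Omega>" and g1: "L2 \<Omega> g1" and g2: "L2 \<Omega> g2"
    and w1: "weak_div \<Omega> \<tau> g1" and w2: "weak_div \<Omega> \<tau> g2"
  shows "AE x in lebesgue_on \<Omega>. g1 x = g2 x"
proof -
  have L: "L2 \<Omega> (\<lambda>x. g1 x + (-1) * g2 x)" by (intro L2_add L2_cmult g1 g2)
  have "AE x in lebesgue_on \<Omega>. g1 x + (-1) * g2 x = 0"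
  proof (rule AE_zero_if_orthogonal_to_C1c[OF op L2_integrable[OF finite_measure_lebesgue_on_open_bounded[OF op bd] L]])
    fix \<phi> d\<phi> assume c: "C1c \<Omega> \<phi> d\<phi>"
    have i1: "integrable (lebesgue_on \<Omega>) (\<lambda>x. g1 x * \<phi> x)" by (rule integrable_mult_continuous[OF op bd g1 C1c_continuous(1)[OF c]])
    have i2: "integrable (lebesgue_on \<Omega>) (\<lambda>x. g2 x * \<phi> x)" by (rule integrable_mult_continuous[OF op bd g2 C1c_continuous(1)[OF c]])
    have e: "(LINT x|lebesgue_on \<Omega>. g1 x * \<phi> x) = (LINT x|lebesgue_on \<Omega>. g2 x * \<phi> x)"
      using w1 w2 c unfolding weak_div_def by force
    have "(LINT x|lebesgue_on \<Omega>. (g1 x + (-1) * g2 x) * \<phi> x) = (LINT x|lebesgue_on \<Omega>. g1 x * \<phi> x - g2 x * \<phi> x)"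
      by (simp add: algebra_simps)
    also have "\<dots> = 0" using Bochner_Integration.integral_diff[OF i1 i2] e by simp
    finally show "(LINT x|lebesgue_on \<Omega>. (g1 x + (-1) * g2 x) * \<phi> x) = 0" .
  qed
  then show ?thesis by eventually_elim simp
qed

lemma wdiv_eq_AE:
  fixes \<Omega> :: "'a::euclidean_space set"
  assumes "open \<Omega>" "bounded \<Omega>" "Hdiv \<Omega> \<tau>" "L2 \<Omega> g" "weak_div \<Omega> \<tau> g"
  shows "AE x in lebesgue_on \<Omega>. wdiv \<Omega> \<tau> x = g x"
  using wdiv_weak_div[OF assms(3)] by (intro weak_div_unique_AE[OF assms(1,2) _ assms(4) _ assms(5)]) auto

lemma weak_div_add:
  fixes \<Omega> :: "'a::euclidean_space set"
  assumes op: "open \<Omega>" and bd: "bounded \<Omega>" and t1: "L2vec \<Omega> \<tau>1" and t2: "L2vec \<Omega> \<tau>2"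
    and g1: "L2 \<Omega> g1" and g2: "L2 \<Omega> g2"
    and w1: "weak_div \<Omega> \<tau>1 g1" and w2: "weak_div \<Omega> \<tau>2 g2"
  shows "weak_div \<Omega> (\<lambda>x. \<tau>1 x + \<tau>2 x) (\<lambda>x. g1 x + g2 x)"
  unfolding weak_div_def
proof (intro allI impI)
  fix \<phi> d\<phi> assume c: "C1c \<Omega> \<phi> d\<phi>"
  have "(LINT x|lebesgue_on \<Omega>. (\<tau>1 x + \<tau>2 x) \<bullet> d\<phi> x) = (LINT x|lebesgue_on \<Omega>. \<tau>1 x \<bullet> d\<phi> x + \<tau>2 x \<bullet> d\<phi> x)"
    by (simp add: inner_add_left)
  also have "\<dots> = (LINT x|lebesgue_on \<Omega>. \<tau>1 x \<bullet> d\<phi> x) + (LINT x|lebesgue_on \<Omega>. \<tau>2 x \<bullet> d\<phi> x)"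
    by (rule Bochner_Integration.integral_add; rule integrable_inner_continuous[OF op bd _ C1c_continuous(2)[OF c]]) (use t1 t2 in auto)
  also have "\<dots> = - (LINT x|lebesgue_on \<Omega>. g1 x * \<phi> x) - (LINT x|lebesgue_on \<Omega>. g2 x * \<phi> x)"
    using w1 w2 c unfolding weak_div_def by simp
  also have "\<dots> = - (LINT x|lebesgue_on \<Omega>. g1 x * \<phi> x + g2 x * \<phi> x)"
    using Bochner_Integration.integral_add[OF integrable_mult_continuous[OF op bd g1 C1c_continuous(1)[OF c]] integrable_mult_continuous[OF op bd g2 C1c_continuous(1)[OF c]]]
    by simp
  also have "\<dots> = - (LINT x|lebesgue_on \<Omega>. (g1 x + g2 x) * \<phi> x)" by (simp add: algebra_simps)
  finally show "(LINT x|lebesgue_on \<Omega>. (\<tau>1 x + \<tau>2 x) \<bullet> d\<phi> x) = - (LINT x|lebesgue_on \<Omega>. (g1 x + g2 x) * \<phi> x)" .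
qed

lemma weak_div_scaleR:
  assumes w: "weak_div \<Omega> \<tau> g"
  shows "weak_div \<Omega> (\<lambda>x. c *\<^sub>R \<tau> x) (\<lambda>x. c * g x)"
  unfolding weak_div_def
proof (intro allI impI)
  fix \<phi> d\<phi> assume c: "C1c \<Omega> \<phi> d\<phi>"
  have "(LINT x|lebesgue_on \<Omega>. (c *\<^sub>R \<tau> x) \<bullet> d\<phi> x) = c * (LINT x|lebesgue_on \<Omega>. \<tau> x \<bullet> d\<phi> x)"
    by simp
  also have "\<dots> = - (c * (LINT x|lebesgue_on \<Omega>. g x * \<phi> x))" using w c unfolding weak_div_def by simp
  also have "\<dots> = - (LINT x|lebesgue_on \<Omega>. c * g x * \<phi> x)" by (simp add: mult.assoc)
  finally show "(LINT x|lebesgue_on \<Omega>. (c *\<^sub>R \<tau> x) \<bullet> d\<phi> x) = - (LINT x|lebesgue_on \<Omega>. c * g x * \<phi> x)" .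
qed

lemma Hdiv_add:
  fixes \<Omega> :: "'a::euclidean_space set"
  assumes op: "open \<Omega>" and bd: "bounded \<Omega>" and h1: "Hdiv \<Omega> \<tau>1" and h2: "Hdiv \<Omega> \<tau>2"
  shows "Hdiv \<Omega> (\<lambda>x. \<tau>1 x + \<tau>2 x)" "AE x in lebesgue_on \<Omega>. wdiv \<Omega> (\<lambda>x. \<tau>1 x + \<tau>2 x) x = wdiv \<Omega> \<tau>1 x + wdiv \<Omega> \<tau>2 x"
proof -
  have t1: "L2vec \<Omega> \<tau>1" and t2: "L2vec \<Omega> \<tau>2" using h1 h2 by (auto simp: Hdiv_def)
  note p1 = wdiv_weak_div[OF h1] and p2 = wdiv_weak_div[OF h2]
  have w: "weak_div \<Omega> (\<lambda>x. \<tau>1 x + \<tau>2 x) (\<lambda>x. wdiv \<Omega> \<tau>1 x + wdiv \<Omega> \<tau>2 x)"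
    using p1 p2 by (intro weak_div_add[OF op bd t1 t2]) auto
  have L: "L2 \<Omega> (\<lambda>x. wdiv \<Omega> \<tau>1 x + wdiv \<Omega> \<tau>2 x)" using p1 p2 by (intro L2_add) auto
  show h: "Hdiv \<Omega> (\<lambda>x. \<tau>1 x + \<tau>2 x)" unfolding Hdiv_def using L2vec_add[OF t1 t2] w L by blast
  show "AE x in lebesgue_on \<Omega>. wdiv \<Omega> (\<lambda>x. \<tau>1 x + \<tau>2 x) x = wdiv \<Omega> \<tau>1 x + wdiv \<Omega> \<tau>2 x"
    by (rule wdiv_eq_AE[OF op bd h L w])
qed

lemma Hdiv_scaleR:
  fixes \<Omega> :: "'a::euclidean_space set"
  assumes op: "open \<Omega>" and bd: "bounded \<Omega>" and h: "Hdiv \<Omega> \<tau>"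
  shows "Hdiv \<Omega> (\<lambda>x. c *\<^sub>R \<tau> x)" "AE x in lebesgue_on \<Omega>. wdiv \<Omega> (\<lambda>x. c *\<^sub>R \<tau> x) x = c * wdiv \<Omega> \<tau> x"
proof -
  have t: "L2vec \<Omega> \<tau>" using h by (auto simp: Hdiv_def)
  note p = wdiv_weak_div[OF h]
  have w: "weak_div \<Omega> (\<lambda>x. c *\<^sub>R \<tau> x) (\<lambda>x. c * wdiv \<Omega> \<tau> x)"
    using p by (intro weak_div_scaleR) auto
  have L: "L2 \<Omega> (\<lambda>x. c * wdiv \<Omega> \<tau> x)" using p by (intro L2_cmult) auto
  show h': "Hdiv \<Omega> (\<lambda>x. c *\<^sub>R \<tau> x)" unfolding Hdiv_def using L2vec_scaleR[OF t] w L by blast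
  show "AE x in lebesgue_on \<Omega>. wdiv \<Omega> (\<lambda>x. c *\<^sub>R \<tau> x) x = c * wdiv \<Omega> \<tau> x"
    by (rule wdiv_eq_AE[OF op bd h' L w])
qed

lemma Hdiv_0minus_iff: "Hdiv_0minus \<Omega> \<sigma> n \<beta> \<tau> \<longleftrightarrow> Hdiv \<Omega> \<tau> \<and>
   (\<forall>v dv. C1c UNIV v dv \<and> (AE x in \<sigma>. x \<notin> inflow_boundary \<Omega> n \<beta> \<longrightarrow> v x = 0) \<longrightarrow>
        (LINT x|lebesgue_on \<Omega>. \<tau> x \<bullet> dv x + v x * wdiv \<Omega> \<tau> x) = 0)"
  unfolding Hdiv_gminus_def by simp

lemma integrable_Green_integrand:
  fixes \<Omega> :: "'a::euclidean_space set"
  assumes op: "open \<Omega>" and bd: "bounded \<Omega>" and h: "Hdiv \<Omega> \<tau>" and c: "C1c UNIV v dv"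
  shows "integrable (lebesgue_on \<Omega>) (\<lambda>x. \<tau> x \<bullet> dv x + v x * wdiv \<Omega> \<tau> x)"
proof (rule Bochner_Integration.integrable_add)
  show "integrable (lebesgue_on \<Omega>) (\<lambda>x. \<tau> x \<bullet> dv x)"
    using h by (intro integrable_inner_continuous[OF op bd _ C1c_continuous(2)[OF c]]) (auto simp: Hdiv_def)
  show "integrable (lebesgue_on \<Omega>) (\<lambda>x. v x * wdiv \<Omega> \<tau> x)"
    using integrable_mult_continuous[OF op bd _ C1c_continuous(1)[OF c], of "wdiv \<Omega> \<tau>"] wdiv_weak_div[OF h] by (simp add: mult.commute)
qed

lemma Hdiv_0minus_add:
  fixes \<Omega> :: "'a::euclidean_space set"
  assumes op: "open \<Omega>" and bd: "bounded \<Omega>"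
    and h1: "Hdiv_0minus \<Omega> \<sigma> n \<beta> \<tau>1" and h2: "Hdiv_0minus \<Omega> \<sigma> n \<beta> \<tau>2"
  shows "Hdiv_0minus \<Omega> \<sigma> n \<beta> (\<lambda>x. \<tau>1 x + \<tau>2 x)"
proof -
  have d1: "Hdiv \<Omega> \<tau>1" and d2: "Hdiv \<Omega> \<tau>2" using h1 h2 by (auto simp: Hdiv_0minus_iff)
  note hs = Hdiv_add[OF op bd d1 d2]
  show ?thesis unfolding Hdiv_0minus_iff
  proof (intro conjI allI impI hs(1))
    fix v dv assume vd: "C1c UNIV v dv \<and> (AE x in \<sigma>. x \<notin> inflow_boundary \<Omega> n \<beta> \<longrightarrow> v x = 0)"
    then have c: "C1c UNIV v dv" by simp
    have "(LINT x|lebesgue_on \<Omega>. (\<tau>1 x + \<tau>2 x) \<bullet> dv x + v x * wdiv \<Omega> (\<lambda>x. \<tau>1 x + \<tau>2 x) x)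
        = (LINT x|lebesgue_on \<Omega>. (\<tau>1 x \<bullet> dv x + v x * wdiv \<Omega> \<tau>1 x) + (\<tau>2 x \<bullet> dv x + v x * wdiv \<Omega> \<tau>2 x))"
    proof (rule integral_cong_AE)
      show "(\<lambda>x. (\<tau>1 x + \<tau>2 x) \<bullet> dv x + v x * wdiv \<Omega> (\<lambda>x. \<tau>1 x + \<tau>2 x) x) \<in> borel_measurable (lebesgue_on \<Omega>)"
        using integrable_Green_integrand[OF op bd hs(1) c] by auto
      show "(\<lambda>x. (\<tau>1 x \<bullet> dv x + v x * wdiv \<Omega> \<tau>1 x) + (\<tau>2 x \<bullet> dv x + v x * wdiv \<Omega> \<tau>2 x)) \<in> borel_measurable (lebesgue_on \<Omega>)"
        using integrable_Green_integrand[OF op bd d1 c] integrable_Green_integrand[OF op bd d2 c] by auto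
      show "AE x in lebesgue_on \<Omega>. (\<tau>1 x + \<tau>2 x) \<bullet> dv x + v x * wdiv \<Omega> (\<lambda>x. \<tau>1 x + \<tau>2 x) x =
           (\<tau>1 x \<bullet> dv x + v x * wdiv \<Omega> \<tau>1 x) + (\<tau>2 x \<bullet> dv x + v x * wdiv \<Omega> \<tau>2 x)"
        using hs(2) by eventually_elim (simp add: algebra_simps)
    qed
    also have "\<dots> = (LINT x|lebesgue_on \<Omega>. \<tau>1 x \<bullet> dv x + v x * wdiv \<Omega> \<tau>1 x) + (LINT x|lebesgue_on \<Omega>. \<tau>2 x \<bullet> dv x + v x * wdiv \<Omega> \<tau>2 x)"
      by (rule Bochner_Integration.integral_add[OF integrable_Green_integrand[OF op bd d1 c] integrable_Green_integrand[OF op bd d2 c]])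
    also have "\<dots> = 0" using h1 h2 vd unfolding Hdiv_0minus_iff by simp
    finally show "(LINT x|lebesgue_on \<Omega>. (\<tau>1 x + \<tau>2 x) \<bullet> dv x + v x * wdiv \<Omega> (\<lambda>x. \<tau>1 x + \<tau>2 x) x) = 0" .
  qed
qed

lemma Hdiv_0minus_scaleR:
  fixes \<Omega> :: "'a::euclidean_space set"
  assumes op: "open \<Omega>" and bd: "bounded \<Omega>" and h: "Hdiv_0minus \<Omega> \<sigma> n \<beta> \<tau>"
  shows "Hdiv_0minus \<Omega> \<sigma> n \<beta> (\<lambda>x. c *\<^sub>R \<tau> x)"
proof -
  have d: "Hdiv \<Omega> \<tau>" using h by (auto simp: Hdiv_0minus_iff)
  note hs = Hdiv_scaleR[OF op bd d, of c]
  show ?thesis unfolding Hdiv_0minus_iff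
  proof (intro conjI allI impI hs(1))
    fix v dv assume vd: "C1c UNIV v dv \<and> (AE x in \<sigma>. x \<notin> inflow_boundary \<Omega> n \<beta> \<longrightarrow> v x = 0)"
    then have c: "C1c UNIV v dv" by simp
    have "(LINT x|lebesgue_on \<Omega>. (c *\<^sub>R \<tau> x) \<bullet> dv x + v x * wdiv \<Omega> (\<lambda>x. c *\<^sub>R \<tau> x) x)
        = (LINT x|lebesgue_on \<Omega>. c * (\<tau> x \<bullet> dv x + v x * wdiv \<Omega> \<tau> x))"
    proof (rule integral_cong_AE)
      show "(\<lambda>x. (c *\<^sub>R \<tau> x) \<bullet> dv x + v x * wdiv \<Omega> (\<lambda>x. c *\<^sub>R \<tau> x) x) \<in> borel_measurable (lebesgue_on \<Omega>)"
        using integrable_Green_integrand[OF op bd hs(1) c] by auto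
      show "(\<lambda>x. c * (\<tau> x \<bullet> dv x + v x * wdiv \<Omega> \<tau> x)) \<in> borel_measurable (lebesgue_on \<Omega>)"
        using integrable_Green_integrand[OF op bd d c] by auto
      show "AE x in lebesgue_on \<Omega>. (c *\<^sub>R \<tau> x) \<bullet> dv x + v x * wdiv \<Omega> (\<lambda>x. c *\<^sub>R \<tau> x) x = c * (\<tau> x \<bullet> dv x + v x * wdiv \<Omega> \<tau> x)"
        using hs(2) by eventually_elim (simp add: algebra_simps)
    qed
    also have "\<dots> = 0" using h vd unfolding Hdiv_0minus_iff by simp
    finally show "(LINT x|lebesgue_on \<Omega>. (c *\<^sub>R \<tau> x) \<bullet> dv x + v x * wdiv \<Omega> (\<lambda>x. c *\<^sub>R \<tau> x) x) = 0" .
  qed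
qed

lemma integral_inner_cong_AE:
  fixes \<Omega> :: "'a::euclidean_space set" and \<tau>1 \<tau>2 d :: "'a \<Rightarrow> 'b::euclidean_space"
  assumes \<Omega>m: "\<Omega> \<in> sets lebesgue"
    and m1: "\<tau>1 \<in> borel_measurable (lebesgue_on \<Omega>)" and m2: "\<tau>2 \<in> borel_measurable (lebesgue_on \<Omega>)"
    and ae: "AE x in lebesgue_on \<Omega>. \<tau>1 x = \<tau>2 x" and d: "continuous_on UNIV d"
  shows "(LINT x|lebesgue_on \<Omega>. \<tau>1 x \<bullet> d x) = (LINT x|lebesgue_on \<Omega>. \<tau>2 x \<bullet> d x)"
proof (rule integral_cong_AE)
  have md: "d \<in> borel_measurable (lebesgue_on \<Omega>)" by (rule continuous_imp_measurable_lebesgue_on[OF d \<Omega>m])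
  show "(\<lambda>x. \<tau>1 x \<bullet> d x) \<in> borel_measurable (lebesgue_on \<Omega>)" by (rule borel_measurable_inner[OF m1 md])
  show "(\<lambda>x. \<tau>2 x \<bullet> d x) \<in> borel_measurable (lebesgue_on \<Omega>)" by (rule borel_measurable_inner[OF m2 md])
  show "AE x in lebesgue_on \<Omega>. \<tau>1 x \<bullet> d x = \<tau>2 x \<bullet> d x" using ae by eventually_elim simp
qed

lemma weak_div_cong_AE:
  fixes \<Omega> :: "'a::euclidean_space set"
  assumes \<Omega>m: "\<Omega> \<in> sets lebesgue"
    and m1: "\<tau>1 \<in> borel_measurable (lebesgue_on \<Omega>)" and m2: "\<tau>2 \<in> borel_measurable (lebesgue_on \<Omega>)"
    and ae: "AE x in lebesgue_on \<Omega>. \<tau>1 x = \<tau>2 x"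
  shows "weak_div \<Omega> \<tau>1 = weak_div \<Omega> \<tau>2"
proof -
  have eq: "(LINT x|lebesgue_on \<Omega>. \<tau>1 x \<bullet> d\<phi> x) = (LINT x|lebesgue_on \<Omega>. \<tau>2 x \<bullet> d\<phi> x)"
    if "C1c \<Omega> \<phi> d\<phi>" for \<phi> d\<phi>
    by (rule integral_inner_cong_AE[OF \<Omega>m m1 m2 ae C1c_continuous(2)[OF that]])
  show ?thesis unfolding weak_div_def by (intro ext) (auto simp: eq)
qed

lemma L2vec_cong_AE:
  assumes m1: "\<tau>1 \<in> borel_measurable (lebesgue_on \<Omega>)" and m2: "\<tau>2 \<in> borel_measurable (lebesgue_on \<Omega>)"
    and ae: "AE x in lebesgue_on \<Omega>. \<tau>1 x = \<tau>2 x"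
  shows "L2vec \<Omega> \<tau>1 \<longleftrightarrow> L2vec \<Omega> \<tau>2"
proof -
  have "(\<lambda>x. (norm (\<tau>1 x))\<^sup>2) \<in> borel_measurable (lebesgue_on \<Omega>)"
    "(\<lambda>x. (norm (\<tau>2 x))\<^sup>2) \<in> borel_measurable (lebesgue_on \<Omega>)"
    using m1 m2 by measurable
  moreover have "AE x in lebesgue_on \<Omega>. (norm (\<tau>1 x))\<^sup>2 = (norm (\<tau>2 x))\<^sup>2"
    using ae by eventually_elim simp
  ultimately show ?thesis
    unfolding L2vec_def using m1 m2 by (simp add: integrable_cong_AE)
qed

lemma wdiv_cong_AE:
  fixes \<Omega> :: "'a::euclidean_space set"
  assumes "\<Omega> \<in> sets lebesgue"
    and "\<tau>1 \<in> borel_measurable (lebesgue_on \<Omega>)" "\<tau>2 \<in> borel_measurable (lebesgue_on \<Omega>)"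
    and "AE x in lebesgue_on \<Omega>. \<tau>1 x = \<tau>2 x"
  shows "wdiv \<Omega> \<tau>1 = wdiv \<Omega> \<tau>2"
  unfolding wdiv_def weak_div_cong_AE[OF assms] ..

lemma Hdiv_cong_AE:
  fixes \<Omega> :: "'a::euclidean_space set"
  assumes "\<Omega> \<in> sets lebesgue"
    and "\<tau>1 \<in> borel_measurable (lebesgue_on \<Omega>)" "\<tau>2 \<in> borel_measurable (lebesgue_on \<Omega>)"
    and "AE x in lebesgue_on \<Omega>. \<tau>1 x = \<tau>2 x"
  shows "Hdiv \<Omega> \<tau>1 \<longleftrightarrow> Hdiv \<Omega> \<tau>2"
  unfolding Hdiv_def weak_div_cong_AE[OF assms] L2vec_cong_AE[OF assms(2-4)] ..

lemma Hdiv_gminus_cong_AE: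
  fixes \<Omega> :: "'a::euclidean_space set"
  assumes \<Omega>m: "\<Omega> \<in> sets lebesgue"
    and m1: "\<tau>1 \<in> borel_measurable (lebesgue_on \<Omega>)" and m2: "\<tau>2 \<in> borel_measurable (lebesgue_on \<Omega>)"
    and ae: "AE x in lebesgue_on \<Omega>. \<tau>1 x = \<tau>2 x"
  shows "Hdiv_gminus \<Omega> \<sigma> n \<beta> g \<tau>1 \<longleftrightarrow> Hdiv_gminus \<Omega> \<sigma> n \<beta> g \<tau>2"
proof -
  note wdiv_eq = wdiv_cong_AE[OF assms]
  have "(LINT x|lebesgue_on \<Omega>. \<tau>1 x \<bullet> dv x + v x * wdiv \<Omega> \<tau>1 x)
      = (LINT x|lebesgue_on \<Omega>. \<tau>2 x \<bullet> dv x + v x * wdiv \<Omega> \<tau>2 x)"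
    if c: "C1c UNIV v dv" and h: "Hdiv \<Omega> \<tau>1" for v dv
  proof (rule integral_cong_AE)
    have mv: "v \<in> borel_measurable (lebesgue_on \<Omega>)" "dv \<in> borel_measurable (lebesgue_on \<Omega>)"
      using C1c_continuous[OF c] by (simp_all add: continuous_imp_measurable_lebesgue_on \<Omega>m)
    have mw: "wdiv \<Omega> \<tau>1 \<in> borel_measurable (lebesgue_on \<Omega>)"
      using wdiv_weak_div[OF h] by (simp add: L2_def)
    show "(\<lambda>x. \<tau>1 x \<bullet> dv x + v x * wdiv \<Omega> \<tau>1 x) \<in> borel_measurable (lebesgue_on \<Omega>)"
      by (intro borel_measurable_add borel_measurable_inner borel_measurable_times m1 mv mw)
    show "(\<lambda>x. \<tau>2 x \<bullet> dv x + v x * wdiv \<Omega> \<tau>2 x) \<in> borel_measurable (lebesgue_on \<Omega>)"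
      unfolding wdiv_eq[symmetric]
      by (intro borel_measurable_add borel_measurable_inner borel_measurable_times m2 mv mw)
    show "AE x in lebesgue_on \<Omega>. \<tau>1 x \<bullet> dv x + v x * wdiv \<Omega> \<tau>1 x = \<tau>2 x \<bullet> dv x + v x * wdiv \<Omega> \<tau>2 x"
      using ae by eventually_elim (simp add: wdiv_eq)
  qed
  then show ?thesis
    unfolding Hdiv_gminus_def using Hdiv_cong_AE[OF assms] by (cases "Hdiv \<Omega> \<tau>1") simp_all
qed

section \<open>Minkowski's inequality\<close>

lemma quadratic_nonneg_imp_discriminant_le:
  fixes A B C :: real
  assumes q: "\<And>t. 0 \<le> A + 2 * t * B + t\<^sup>2 * C" and C: "C \<ge> 0"
  shows "B\<^sup>2 \<le> A * C"
proof (cases "C = 0")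
  case True
  show ?thesis
  proof (cases "B = 0")
    case False
    have "0 \<le> A + 2 * (- (\<bar>A\<bar> + 1) / (2 * B)) * B + (- (\<bar>A\<bar> + 1) / (2 * B))\<^sup>2 * C" by (rule q)
    moreover have "2 * (- (\<bar>A\<bar> + 1) / (2 * B)) * B = - (\<bar>A\<bar> + 1)" using False by (simp add: field_simps)
    ultimately have "0 \<le> A - (\<bar>A\<bar> + 1)" using True by simp
    then show ?thesis by simp
  qed (use True in simp)
next
  case False
  then have Cp: "C > 0" using C by simp
  have "0 \<le> A + 2 * (- B / C) * B + (- B / C)\<^sup>2 * C" by (rule q)
  also have "\<dots> = A - B\<^sup>2 / C" using Cp by (simp add: field_simps power2_eq_square)
  finally have "B\<^sup>2 / C \<le> A" by simp
  then show ?thesis using Cp by (simp add: field_simps)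
qed

lemma L2_norm_triangle:
  assumes f: "L2 \<Omega> f" and g: "L2 \<Omega> g"
  shows "sqrt (LINT x|lebesgue_on \<Omega>. (f x + g x)\<^sup>2)
     \<le> sqrt (LINT x|lebesgue_on \<Omega>. (f x)\<^sup>2) + sqrt (LINT x|lebesgue_on \<Omega>. (g x)\<^sup>2)"
proof -
  define A where "A = (LINT x|lebesgue_on \<Omega>. (f x)\<^sup>2)"
  define B where "B = (LINT x|lebesgue_on \<Omega>. f x * g x)"
  define C where "C = (LINT x|lebesgue_on \<Omega>. (g x)\<^sup>2)"
  have if2: "integrable (lebesgue_on \<Omega>) (\<lambda>x. (f x)\<^sup>2)" and ig2: "integrable (lebesgue_on \<Omega>) (\<lambda>x. (g x)\<^sup>2)"
    using f g by (auto simp: L2_def)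
  have ifg: "integrable (lebesgue_on \<Omega>) (\<lambda>x. f x * g x)" by (rule integrable_mult_L2[OF f g])
  have exp: "(LINT x|lebesgue_on \<Omega>. (f x + t * g x)\<^sup>2) = A + 2 * t * B + t\<^sup>2 * C" for t
  proof -
    have "(LINT x|lebesgue_on \<Omega>. (f x + t * g x)\<^sup>2) = (LINT x|lebesgue_on \<Omega>. ((f x)\<^sup>2 + (2 * t) * (f x * g x)) + t\<^sup>2 * (g x)\<^sup>2)"
      by (simp add: power2_eq_square algebra_simps)
    also have "\<dots> = (LINT x|lebesgue_on \<Omega>. (f x)\<^sup>2 + (2 * t) * (f x * g x)) + (LINT x|lebesgue_on \<Omega>. t\<^sup>2 * (g x)\<^sup>2)"
      by (rule Bochner_Integration.integral_add) (use if2 ifg ig2 in auto)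
    also have "\<dots> = A + 2 * t * B + t\<^sup>2 * C"
      unfolding A_def B_def C_def
      by (subst Bochner_Integration.integral_add) (use if2 ifg ig2 in auto)
    finally show ?thesis .
  qed
  have A0: "A \<ge> 0" unfolding A_def by simp
  have C0: "C \<ge> 0" unfolding C_def by simp
  have "B\<^sup>2 \<le> A * C"
  proof (rule quadratic_nonneg_imp_discriminant_le[OF _ C0])
    fix t
    have "0 \<le> (LINT x|lebesgue_on \<Omega>. (f x + t * g x)\<^sup>2)" by simp
    then show "0 \<le> A + 2 * t * B + t\<^sup>2 * C" using exp by simp
  qed
  then have "\<bar>B\<bar> \<le> sqrt A * sqrt C"
    by (metis real_sqrt_abs real_sqrt_le_mono real_sqrt_mult)
  then have B: "B \<le> sqrt A * sqrt C" by simp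
  have "(LINT x|lebesgue_on \<Omega>. (f x + g x)\<^sup>2) = A + 2 * B + C" using exp[of 1] by simp
  also have "\<dots> \<le> (sqrt A + sqrt C)\<^sup>2"
    using B A0 C0 by (simp add: power2_sum)
  finally have "sqrt (LINT x|lebesgue_on \<Omega>. (f x + g x)\<^sup>2) \<le> sqrt ((sqrt A + sqrt C)\<^sup>2)"
    by (rule real_sqrt_le_mono)
  also have "\<dots> = sqrt A + sqrt C" using A0 C0 by simp
  finally show ?thesis unfolding A_def C_def .
qed

lemma sqrt_sum_L2_set:
  assumes "\<And>k. k \<in> K \<Longrightarrow> X k \<ge> 0"
  shows "sqrt (\<Sum>k\<in>K. X k) = L2_set (\<lambda>k. sqrt (X k)) K"
  unfolding L2_set_def using assms by (intro arg_cong[where f=sqrt] sum.cong) auto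

lemma sqrt_sum_L2_norms_triangle:
  assumes fin: "finite K"
    and f: "\<And>k. k \<in> K \<Longrightarrow> L2 \<Omega> (f k)" and g: "\<And>k. k \<in> K \<Longrightarrow> L2 \<Omega> (g k)"
    and h: "\<And>k. k \<in> K \<Longrightarrow> (LINT x|lebesgue_on \<Omega>. (h k x)\<^sup>2) = (LINT x|lebesgue_on \<Omega>. (f k x + g k x)\<^sup>2)"
  shows "sqrt (\<Sum>k\<in>K. LINT x|lebesgue_on \<Omega>. (h k x)\<^sup>2)
     \<le> sqrt (\<Sum>k\<in>K. LINT x|lebesgue_on \<Omega>. (f k x)\<^sup>2) + sqrt (\<Sum>k\<in>K. LINT x|lebesgue_on \<Omega>. (g k x)\<^sup>2)"
proof -
  have "sqrt (\<Sum>k\<in>K. LINT x|lebesgue_on \<Omega>. (h k x)\<^sup>2) = L2_set (\<lambda>k. sqrt (LINT x|lebesgue_on \<Omega>. (h k x)\<^sup>2)) K"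
    by (rule sqrt_sum_L2_set) simp
  also have "\<dots> \<le> L2_set (\<lambda>k. sqrt (LINT x|lebesgue_on \<Omega>. (f k x)\<^sup>2) + sqrt (LINT x|lebesgue_on \<Omega>. (g k x)\<^sup>2)) K"
    by (rule L2_set_mono) (use L2_norm_triangle[OF f g] h in auto)
  also have "\<dots> \<le> L2_set (\<lambda>k. sqrt (LINT x|lebesgue_on \<Omega>. (f k x)\<^sup>2)) K + L2_set (\<lambda>k. sqrt (LINT x|lebesgue_on \<Omega>. (g k x)\<^sup>2)) K"
    by (rule L2_set_triangle_ineq)
  also have "\<dots> = sqrt (\<Sum>k\<in>K. LINT x|lebesgue_on \<Omega>. (f k x)\<^sup>2) + sqrt (\<Sum>k\<in>K. LINT x|lebesgue_on \<Omega>. (g k x)\<^sup>2)"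
    by (subst (1 2) sqrt_sum_L2_set) auto
  finally show ?thesis .
qed

section \<open>Orthonormal decomposition\<close>

lemma span_insert_orthonormal_eq_UNIV:
  fixes b :: "'a::euclidean_space" and bp :: "nat \<Rightarrow> 'a"
  assumes b: "b \<noteq> 0" and orth: "\<forall>i\<in>{1..DIM('a)-1}. b \<bullet> bp i = 0"
    and onb: "\<forall>i\<in>{1..DIM('a)-1}. \<forall>j\<in>{1..DIM('a)-1}. bp i \<bullet> bp j = (if i = j then 1 else 0)"
  shows "span (insert b (bp ` {1..DIM('a)-1})) = UNIV"
proof -
  define I where "I = {1..DIM('a)-1}"
  define S where "S = insert b (bp ` I)"
  have inj: "inj_on bp I"
  proof (rule inj_onI)
    fix i j assume ij: "i \<in> I" "j \<in> I" "bp i = bp j"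
    have "bp i \<bullet> bp j = 1" using onb ij unfolding I_def by auto
    then show "i = j" using onb ij unfolding I_def by (metis zero_neq_one)
  qed
  have "b \<notin> bp ` I"
  proof
    assume "b \<in> bp ` I"
    then obtain i where "i \<in> I" "b = bp i" by auto
    then have "b \<bullet> b = 0" using orth I_def by auto
    then show False using b by simp
  qed
  then have "card S = Suc (card I)"
    unfolding S_def using card_image[OF inj] by (simp add: I_def)
  also have "\<dots> = DIM('a)" unfolding I_def using DIM_positive[where 'a='a] by simp
  finally have card: "card S = DIM('a)" .
  have "pairwise orthogonal S"
    unfolding pairwise_def S_def orthogonal_def using orth onb unfolding I_def
    by (auto simp: inner_commute)
  moreover have "0 \<notin> S"
  proof
    assume "0 \<in> S"
    then obtain i where "i \<in> I" "bp i = 0" using b unfolding S_def by auto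
    then show False using onb unfolding I_def by force
  qed
  ultimately have "independent S" by (rule pairwise_orthogonal_independent)
  then have "UNIV \<subseteq> span S"
    by (rule card_ge_dim_independent[rotated]) (use card in auto)
  then show ?thesis unfolding S_def I_def by (rule top.extremum_uniqueI)
qed

lemma orthogonal_complement_imp_parallel:
  fixes b t :: "'a::euclidean_space" and bp :: "nat \<Rightarrow> 'a"
  assumes b: "b \<noteq> 0" and orth: "\<forall>i\<in>{1..DIM('a)-1}. b \<bullet> bp i = 0"
    and onb: "\<forall>i\<in>{1..DIM('a)-1}. \<forall>j\<in>{1..DIM('a)-1}. bp i \<bullet> bp j = (if i = j then 1 else 0)"
    and t: "\<forall>i\<in>{1..DIM('a)-1}. t \<bullet> bp i = 0"
  shows "t = ((b \<bullet> t) / (norm b)\<^sup>2) *\<^sub>R b"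
proof -
  define u where "u = t - ((b \<bullet> t) / (norm b)\<^sup>2) *\<^sub>R b"
  have bb: "b \<bullet> b = (norm b)\<^sup>2" by (simp add: power2_norm_eq_inner)
  have u_b: "u \<bullet> b = t \<bullet> b - (b \<bullet> t / (norm b)\<^sup>2) * (b \<bullet> b)" unfolding u_def by (simp add: inner_diff_left)
  have "(norm b)\<^sup>2 \<noteq> 0" using b by simp
  then have "t \<bullet> b - (b \<bullet> t / (norm b)\<^sup>2) * (b \<bullet> b) = 0" unfolding bb by (simp add: inner_commute)
  with u_b have ub: "u \<bullet> b = 0" by simp
  have ubp: "u \<bullet> bp i = 0" if "i \<in> {1..DIM('a)-1}" for i
    unfolding u_def using that t orth by (simp add: inner_diff_left)
  have us: "u \<in> span (insert b (bp ` {1..DIM('a)-1}))"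
    using span_insert_orthonormal_eq_UNIV[OF b orth onb] by simp
  have "orthogonal u u"
    by (rule orthogonal_to_span[OF us]) (use ub ubp in \<open>auto simp: orthogonal_def\<close>)
  then have "u = 0" by (simp add: orthogonal_def)
  then show ?thesis unfolding u_def by simp
qed

lemma Hdiv_zero:
  fixes \<Omega> :: "'a::euclidean_space set"
  assumes "open \<Omega>" "bounded \<Omega>"
  shows "Hdiv \<Omega> (\<lambda>x. 0)" "AE x in lebesgue_on \<Omega>. wdiv \<Omega> (\<lambda>x. 0) x = 0"
proof -
  have "weak_div \<Omega> (\<lambda>x. 0) (\<lambda>x. 0)" by (simp add: weak_div_def)
  then show "Hdiv \<Omega> (\<lambda>x. 0)" unfolding Hdiv_def L2vec_def using L2_zero by auto
  then show "AE x in lebesgue_on \<Omega>. wdiv \<Omega> (\<lambda>x. 0) x = 0"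
    using \<open>weak_div \<Omega> (\<lambda>x. 0) (\<lambda>x. 0)\<close> by (rule wdiv_eq_AE[OF assms _ L2_zero])
qed

lemma solves_transport_zero:
  fixes \<Omega> :: "'a::euclidean_space set"
  assumes "open \<Omega>" "bounded \<Omega>"
  shows "solves_transport \<Omega> \<sigma> n \<beta> \<gamma> (\<lambda>_. 0) (\<lambda>_. 0) (\<lambda>_. 0)"
proof -
  note zero = Hdiv_zero[OF assms]
  have "(LINT x|lebesgue_on \<Omega>. 0 \<bullet> dv x + v x * wdiv \<Omega> (\<lambda>x. 0) x) = 0" for v dv :: "'a \<Rightarrow> _"
    by (rule integral_eq_zero_AE) (use zero(2) in \<open>auto elim: eventually_mono\<close>)
  then show ?thesis
    unfolding solves_transport_def W_space_def Hdiv_gminus_def using zero L2_zero by simp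
qed

lemma assumption_A_homogeneous_unique:
  fixes \<Omega> :: "'a::euclidean_space set"
  assumes "assumption_A \<Omega> \<sigma> n \<beta> \<gamma>" "open \<Omega>" "bounded \<Omega>"
    and "solves_transport \<Omega> \<sigma> n \<beta> \<gamma> (\<lambda>_. 0) (\<lambda>_. 0) u"
  shows "AE x in lebesgue_on \<Omega>. u x = 0"
proof -
  have "L2_inflow \<Omega> \<sigma> n \<beta> (\<lambda>_. 0)" by (simp add: L2_inflow_def)
  then show ?thesis
    using assms solves_transport_zero[OF assms(2,3)] L2_zero unfolding assumption_A_def by blast
qed

section \<open>The functional\<close>

lemma compact_continuous_pos_lower_bound:
  fixes f :: "'a::topological_space \<Rightarrow> real"
  assumes "compact K" "continuous_on K f" "\<forall>x\<in>K. 0 < f x"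
  obtains m where "m > 0" "\<forall>x\<in>K. m \<le> f x"
proof (cases "K = {}")
  case True
  then show ?thesis using that[of 1] by simp
next
  case False
  then obtain x0 where "x0 \<in> K" "\<forall>y\<in>K. f x0 \<le> f y"
    using continuous_attains_inf[OF assms(1) False assms(2)] by blast
  then show ?thesis using that assms(3) by blast
qed

locale triple_norm1_setting =
  fixes \<Omega> :: "'a::euclidean_space set" and \<beta> :: "'a \<Rightarrow> 'a" and \<gamma> :: "'a \<Rightarrow> real"
    and bp :: "nat \<Rightarrow> 'a \<Rightarrow> 'a"
  assumes open_dom: "open \<Omega>" and bounded_dom: "bounded \<Omega>"
    and beta_cont: "continuous_on (closure \<Omega>) \<beta>"
    and beta_pos: "\<forall>x\<in>closure \<Omega>. norm (\<beta> x) > 0"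
    and gamma_Linfty: "Linfty \<Omega> \<gamma>"
    and bp_meas: "\<forall>i\<in>{1..DIM('a) - 1}. bp i \<in> borel_measurable (lebesgue_on \<Omega>)"
    and bp_orth: "\<forall>x\<in>\<Omega>. \<forall>i\<in>{1..DIM('a) - 1}. \<beta> x \<bullet> bp i x = 0"
    and bp_onb: "\<forall>x\<in>\<Omega>. \<forall>i\<in>{1..DIM('a) - 1}. \<forall>j\<in>{1..DIM('a) - 1}.
                   bp i x \<bullet> bp j x = (if i = j then 1 else 0)"
begin

lemma sets_lebesgue_dom: "\<Omega> \<in> sets lebesgue"
  using open_dom by simp

lemma beta_measurable: "\<beta> \<in> borel_measurable (lebesgue_on \<Omega>)"
  by (rule continuous_imp_measurable_on_sets_lebesgue[OF
        continuous_on_subset[OF beta_cont closure_subset] sets_lebesgue_dom])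

lemma beta_AE_bounded: obtains C where "AE x in lebesgue_on \<Omega>. norm (\<beta> x) \<le> C"
proof -
  obtain C where "\<forall>x\<in>\<Omega>. norm (\<beta> x) \<le> C"
    using continuous_on_closure_norm_bounded[OF beta_cont bounded_dom] by blast
  then have "AE x in lebesgue_on \<Omega>. norm (\<beta> x) \<le> C"
    using AE_lebesgue_on_mem[of \<Omega>] by (auto elim: eventually_mono)
  then show ?thesis by (rule that)
qed

lemma inverse_norm_beta_square_AE_bounded:
  obtains C where "AE x in lebesgue_on \<Omega>. \<bar>1 / (norm (\<beta> x))\<^sup>2\<bar> \<le> C"
proof -
  obtain m where m: "m > 0" "\<forall>x\<in>closure \<Omega>. m \<le> norm (\<beta> x)"
    using compact_continuous_pos_lower_bound[of "closure \<Omega>" "\<lambda>x. norm (\<beta> x)"]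
      bounded_dom beta_cont beta_pos by (auto intro: continuous_intros)
  have "AE x in lebesgue_on \<Omega>. \<bar>1 / (norm (\<beta> x))\<^sup>2\<bar> \<le> 1 / m\<^sup>2"
    using AE_lebesgue_on_mem[of \<Omega>]
  proof eventually_elim
    case (elim x)
    have "m\<^sup>2 \<le> (norm (\<beta> x))\<^sup>2" using m elim closure_subset by (intro power_mono) auto
    then show ?case using m by (simp add: frac_le)
  qed
  then show ?thesis by (rule that)
qed

lemma gamma_tilde_AE_bounded:
  obtains C where "AE x in lebesgue_on \<Omega>. \<bar>\<gamma> x / (norm (\<beta> x))\<^sup>2\<bar> \<le> C"
proof -
  obtain C\<gamma> where C\<gamma>: "AE x in lebesgue_on \<Omega>. \<bar>\<gamma> x\<bar> \<le> C\<gamma>"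
    using gamma_Linfty by (auto simp: Linfty_def)
  obtain C where C: "AE x in lebesgue_on \<Omega>. \<bar>1 / (norm (\<beta> x))\<^sup>2\<bar> \<le> C"
    by (rule inverse_norm_beta_square_AE_bounded)
  have "AE x in lebesgue_on \<Omega>. \<bar>\<gamma> x / (norm (\<beta> x))\<^sup>2\<bar> \<le> C\<gamma> * C"
    using C\<gamma> C
  proof eventually_elim
    case (elim x)
    have "\<bar>\<gamma> x / (norm (\<beta> x))\<^sup>2\<bar> = \<bar>\<gamma> x\<bar> * \<bar>1 / (norm (\<beta> x))\<^sup>2\<bar>"
      by (simp add: abs_mult divide_inverse)
    also have "\<dots> \<le> C\<gamma> * C" using elim by (intro mult_mono) auto
    finally show ?case .
  qed
  then show ?thesis by (rule that)
qed

lemma L2_beta_inner: "L2vec \<Omega> \<tau> \<Longrightarrow> L2 \<Omega> (\<lambda>x. \<beta> x \<bullet> \<tau> x)"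
  using beta_AE_bounded by (metis L2_inner_bounded beta_measurable)

lemma L2_inner_bp: "L2vec \<Omega> \<tau> \<Longrightarrow> i \<in> {1..DIM('a) - 1} \<Longrightarrow> L2 \<Omega> (\<lambda>x. \<tau> x \<bullet> bp i x)"
proof -
  assume t: "L2vec \<Omega> \<tau>" and i: "i \<in> {1..DIM('a) - 1}"
  have "AE x in lebesgue_on \<Omega>. norm (bp i x) \<le> 1"
    using AE_lebesgue_on_mem[of \<Omega>]
  proof eventually_elim
    case (elim x)
    then have "bp i x \<bullet> bp i x = 1" using bp_onb i by auto
    then show ?case by (simp add: norm_eq_sqrt_inner)
  qed
  then have "L2 \<Omega> (\<lambda>x. bp i x \<bullet> \<tau> x)"
    by (rule L2_inner_bounded[OF t, rotated]) (use bp_meas i in auto)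
  then show ?thesis by (simp add: inner_commute)
qed

definition norm1_term :: "('a \<Rightarrow> 'a) \<Rightarrow> nat \<Rightarrow> 'a \<Rightarrow> real" where
  "norm1_term \<tau> k x =
     (if k = 0 then wdiv \<Omega> \<tau> x + (\<gamma> x / (norm (\<beta> x))\<^sup>2) * (\<beta> x \<bullet> \<tau> x) else \<tau> x \<bullet> bp k x)"

lemma triple_norm1_eq_sqrt_sum:
  "triple_norm1 \<Omega> \<beta> \<gamma> bp \<tau> = sqrt (\<Sum>k\<le>DIM('a) - 1. LINT x|lebesgue_on \<Omega>. (norm1_term \<tau> k x)\<^sup>2)"
proof -
  have "{..DIM('a) - 1} = insert 0 {1..DIM('a) - 1}" by auto
  then have "(\<Sum>k\<le>DIM('a) - 1. LINT x|lebesgue_on \<Omega>. (norm1_term \<tau> k x)\<^sup>2)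
      = (LINT x|lebesgue_on \<Omega>. (norm1_term \<tau> 0 x)\<^sup>2)
        + (\<Sum>k\<in>{1..DIM('a) - 1}. LINT x|lebesgue_on \<Omega>. (norm1_term \<tau> k x)\<^sup>2)"
    by (simp add: sum.insert)
  also have "\<dots> = (LINT x|lebesgue_on \<Omega>. (wdiv \<Omega> \<tau> x + (\<gamma> x / (norm (\<beta> x))\<^sup>2) * (\<beta> x \<bullet> \<tau> x))\<^sup>2)
        + (\<Sum>k\<in>{1..DIM('a) - 1}. LINT x|lebesgue_on \<Omega>. (\<tau> x \<bullet> bp k x)\<^sup>2)"
    by (intro arg_cong2[where f="(+)"] sum.cong) (auto simp: norm1_term_def)
  finally show ?thesis unfolding triple_norm1_def by simp
qed

lemma L2_norm1_term:
  assumes h: "Hdiv \<Omega> \<tau>" and k: "k \<le> DIM('a) - 1"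
  shows "L2 \<Omega> (norm1_term \<tau> k)"
proof (cases "k = 0")
  case True
  have t: "L2vec \<Omega> \<tau>" using h by (simp add: Hdiv_def)
  obtain C where C: "AE x in lebesgue_on \<Omega>. \<bar>\<gamma> x / (norm (\<beta> x))\<^sup>2\<bar> \<le> C"
    by (rule gamma_tilde_AE_bounded)
  have [measurable]: "\<gamma> \<in> borel_measurable (lebesgue_on \<Omega>)" "\<beta> \<in> borel_measurable (lebesgue_on \<Omega>)"
    using gamma_Linfty beta_measurable by (simp_all add: Linfty_def)
  have "(\<lambda>x. \<gamma> x / (norm (\<beta> x))\<^sup>2) \<in> borel_measurable (lebesgue_on \<Omega>)"
    by measurable
  then have "L2 \<Omega> (\<lambda>x. wdiv \<Omega> \<tau> x + (\<gamma> x / (norm (\<beta> x))\<^sup>2) * (\<beta> x \<bullet> \<tau> x))"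
    using wdiv_weak_div[OF h] by (intro L2_add L2_mult_bounded[OF L2_beta_inner[OF t] _ C]) auto
  then show ?thesis using True by (simp add: norm1_term_def[abs_def])
next
  case False
  then have "L2 \<Omega> (\<lambda>x. \<tau> x \<bullet> bp k x)"
    using h k by (intro L2_inner_bp) (auto simp: Hdiv_def)
  then show ?thesis using False by (simp add: norm1_term_def[abs_def])
qed

lemma integrable_triple_norm1_terms:
  assumes "Hdiv \<Omega> \<tau>"
  shows "integrable (lebesgue_on \<Omega>) (\<lambda>x. (wdiv \<Omega> \<tau> x + (\<gamma> x / (norm (\<beta> x))\<^sup>2) * (\<beta> x \<bullet> \<tau> x))\<^sup>2)"
    and "i \<in> {1..DIM('a) - 1} \<Longrightarrow> integrable (lebesgue_on \<Omega>) (\<lambda>x. (\<tau> x \<bullet> bp i x)\<^sup>2)"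
  using L2_norm1_term[OF assms, of 0] L2_norm1_term[OF assms, of i]
  by (auto simp: L2_def norm1_term_def)

lemma norm1_term_add_AE:
  assumes "Hdiv \<Omega> \<tau>1" "Hdiv \<Omega> \<tau>2"
  shows "AE x in lebesgue_on \<Omega>. norm1_term (\<lambda>x. \<tau>1 x + \<tau>2 x) k x = norm1_term \<tau>1 k x + norm1_term \<tau>2 k x"
  using Hdiv_add(2)[OF open_dom bounded_dom assms]
  by eventually_elim (simp add: norm1_term_def inner_add_left inner_add_right algebra_simps)

lemma norm1_term_scaleR_AE:
  assumes "Hdiv \<Omega> \<tau>"
  shows "AE x in lebesgue_on \<Omega>. norm1_term (\<lambda>x. c *\<^sub>R \<tau> x) k x = c * norm1_term \<tau> k x"
  using Hdiv_scaleR(2)[OF open_dom bounded_dom assms, of c]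
  by eventually_elim (simp add: norm1_term_def algebra_simps)

lemma triple_norm1_add_le:
  assumes h1: "Hdiv \<Omega> \<tau>1" and h2: "Hdiv \<Omega> \<tau>2"
  shows "triple_norm1 \<Omega> \<beta> \<gamma> bp (\<lambda>x. \<tau>1 x + \<tau>2 x) \<le> triple_norm1 \<Omega> \<beta> \<gamma> bp \<tau>1 + triple_norm1 \<Omega> \<beta> \<gamma> bp \<tau>2"
proof -
  have "(LINT x|lebesgue_on \<Omega>. (norm1_term (\<lambda>x. \<tau>1 x + \<tau>2 x) k x)\<^sup>2)
      = (LINT x|lebesgue_on \<Omega>. (norm1_term \<tau>1 k x + norm1_term \<tau>2 k x)\<^sup>2)" if k: "k \<le> DIM('a) - 1" for k
    using L2_norm1_term[OF Hdiv_add(1)[OF open_dom bounded_dom h1 h2] k]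
      L2_add[OF L2_norm1_term[OF h1 k] L2_norm1_term[OF h2 k]] norm1_term_add_AE[OF h1 h2]
    by (rule integral_square_cong_AE)
  then show ?thesis unfolding triple_norm1_eq_sqrt_sum
    using L2_norm1_term[OF h1] L2_norm1_term[OF h2] by (intro sqrt_sum_L2_norms_triangle) auto
qed

lemma triple_norm1_scaleR:
  assumes h: "Hdiv \<Omega> \<tau>"
  shows "triple_norm1 \<Omega> \<beta> \<gamma> bp (\<lambda>x. c *\<^sub>R \<tau> x) = \<bar>c\<bar> * triple_norm1 \<Omega> \<beta> \<gamma> bp \<tau>"
proof -
  have "(LINT x|lebesgue_on \<Omega>. (norm1_term (\<lambda>x. c *\<^sub>R \<tau> x) k x)\<^sup>2)
      = c\<^sup>2 * (LINT x|lebesgue_on \<Omega>. (norm1_term \<tau> k x)\<^sup>2)" if k: "k \<le> DIM('a) - 1" for k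
  proof -
    have "(LINT x|lebesgue_on \<Omega>. (norm1_term (\<lambda>x. c *\<^sub>R \<tau> x) k x)\<^sup>2)
        = (LINT x|lebesgue_on \<Omega>. (c * norm1_term \<tau> k x)\<^sup>2)"
      using L2_norm1_term[OF Hdiv_scaleR(1)[OF open_dom bounded_dom h] k]
        L2_cmult[OF L2_norm1_term[OF h k]] norm1_term_scaleR_AE[OF h]
      by (rule integral_square_cong_AE)
    then show ?thesis by (simp add: power_mult_distrib)
  qed
  then have "triple_norm1 \<Omega> \<beta> \<gamma> bp (\<lambda>x. c *\<^sub>R \<tau> x)
      = sqrt (c\<^sup>2 * (\<Sum>k\<le>DIM('a) - 1. LINT x|lebesgue_on \<Omega>. (norm1_term \<tau> k x)\<^sup>2))"
    unfolding triple_norm1_eq_sqrt_sum by (simp add: sum_distrib_left)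
  then show ?thesis unfolding triple_norm1_eq_sqrt_sum by (simp add: real_sqrt_mult)
qed

lemma triple_norm1_eq_0_imp_terms_AE_0:
  assumes h: "Hdiv \<Omega> \<tau>" and z: "triple_norm1 \<Omega> \<beta> \<gamma> bp \<tau> = 0"
  shows "AE x in lebesgue_on \<Omega>. \<forall>k\<le>DIM('a) - 1. norm1_term \<tau> k x = 0"
proof -
  have "(\<Sum>k\<le>DIM('a) - 1. LINT x|lebesgue_on \<Omega>. (norm1_term \<tau> k x)\<^sup>2) = 0"
    using z unfolding triple_norm1_eq_sqrt_sum by simp
  then have "(LINT x|lebesgue_on \<Omega>. (norm1_term \<tau> k x)\<^sup>2) = 0" if "k \<le> DIM('a) - 1" for k
    using that by (subst (asm) sum_nonneg_eq_0_iff) auto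
  then have "AE x in lebesgue_on \<Omega>. norm1_term \<tau> k x = 0" if "k \<le> DIM('a) - 1" for k
    using that L2_norm1_term[OF h] by (auto intro: L2_AE_zero)
  then have "AE x in lebesgue_on \<Omega>. \<forall>k\<in>{..DIM('a) - 1}. norm1_term \<tau> k x = 0"
    by (intro AE_finite_allI) auto
  then show ?thesis by (rule eventually_mono) auto
qed

lemma triple_norm1_eq_0_imp_parallel:
  assumes h: "Hdiv \<Omega> \<tau>" and z: "triple_norm1 \<Omega> \<beta> \<gamma> bp \<tau> = 0"
  shows "AE x in lebesgue_on \<Omega>. \<tau> x = ((\<beta> x \<bullet> \<tau> x) / (norm (\<beta> x))\<^sup>2) *\<^sub>R \<beta> x
           \<and> wdiv \<Omega> \<tau> x + \<gamma> x * ((\<beta> x \<bullet> \<tau> x) / (norm (\<beta> x))\<^sup>2) = 0"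
  using triple_norm1_eq_0_imp_terms_AE_0[OF h z] AE_lebesgue_on_mem[of \<Omega>]
proof eventually_elim
  case (elim x)
  have "\<beta> x \<noteq> 0" using beta_pos elim closure_subset by force
  moreover have "\<tau> x \<bullet> bp i x = 0" if "i \<in> {1..DIM('a) - 1}" for i
    using elim(1) that by (auto simp: norm1_term_def)
  ultimately have "\<tau> x = ((\<beta> x \<bullet> \<tau> x) / (norm (\<beta> x))\<^sup>2) *\<^sub>R \<beta> x"
    using bp_orth bp_onb elim(2)
    by (intro orthogonal_complement_imp_parallel) auto
  moreover have "norm1_term \<tau> 0 x = 0" using elim(1) by blast
  ultimately show ?case by (simp add: norm1_term_def)
qed

lemma triple_norm1_eq_0_imp_solves_transport:
  assumes H: "Hdiv_0minus \<Omega> \<sigma> n \<beta> \<tau>" and z: "triple_norm1 \<Omega> \<beta> \<gamma> bp \<tau> = 0"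
  shows "solves_transport \<Omega> \<sigma> n \<beta> \<gamma> (\<lambda>_. 0) (\<lambda>_. 0) (\<lambda>x. (\<beta> x \<bullet> \<tau> x) / (norm (\<beta> x))\<^sup>2)"
proof -
  define \<psi> where "\<psi> x = (\<beta> x \<bullet> \<tau> x) / (norm (\<beta> x))\<^sup>2" for x
  have h: "Hdiv \<Omega> \<tau>" using H by (simp add: Hdiv_0minus_iff)
  then have t: "L2vec \<Omega> \<tau>" by (simp add: Hdiv_def)
  have \<tau>m: "\<tau> \<in> borel_measurable (lebesgue_on \<Omega>)" using t by (simp add: L2vec_def)
  have par: "AE x in lebesgue_on \<Omega>. \<tau> x = \<psi> x *\<^sub>R \<beta> x \<and> wdiv \<Omega> \<tau> x + \<gamma> x * \<psi> x = 0"
    unfolding \<psi>_def by (rule triple_norm1_eq_0_imp_parallel[OF h z])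
  have \<psi>m: "\<psi> \<in> borel_measurable (lebesgue_on \<Omega>)"
    unfolding \<psi>_def using beta_measurable \<tau>m by measurable
  have "(\<lambda>x. \<psi> x *\<^sub>R \<beta> x) \<in> borel_measurable (lebesgue_on \<Omega>)"
    using \<psi>m beta_measurable by measurable
  moreover have "AE x in lebesgue_on \<Omega>. \<tau> x = \<psi> x *\<^sub>R \<beta> x"
    using par by eventually_elim simp
  ultimately have cong: "\<Omega> \<in> sets lebesgue" "\<tau> \<in> borel_measurable (lebesgue_on \<Omega>)"
    "(\<lambda>x. \<psi> x *\<^sub>R \<beta> x) \<in> borel_measurable (lebesgue_on \<Omega>)"
    "AE x in lebesgue_on \<Omega>. \<tau> x = \<psi> x *\<^sub>R \<beta> x"
    using sets_lebesgue_dom \<tau>m by auto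
  have "L2 \<Omega> \<psi>"
  proof -
    obtain C where C: "AE x in lebesgue_on \<Omega>. \<bar>1 / (norm (\<beta> x))\<^sup>2\<bar> \<le> C"
      by (rule inverse_norm_beta_square_AE_bounded)
    have "L2 \<Omega> (\<lambda>x. (1 / (norm (\<beta> x))\<^sup>2) * (\<beta> x \<bullet> \<tau> x))"
      by (rule L2_mult_bounded[OF L2_beta_inner[OF t] _ C]) (use beta_measurable in measurable)
    then show ?thesis unfolding \<psi>_def by simp
  qed
  moreover have "Hdiv_gminus \<Omega> \<sigma> n \<beta> (\<lambda>_. 0) (\<lambda>x. \<psi> x *\<^sub>R \<beta> x)"
    using H Hdiv_gminus_cong_AE[OF cong] by simp
  moreover have "AE x in lebesgue_on \<Omega>. wdiv \<Omega> (\<lambda>y. \<psi> y *\<^sub>R \<beta> y) x + \<gamma> x * \<psi> x = 0"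
    unfolding wdiv_cong_AE[OF cong, symmetric] using par by eventually_elim simp
  ultimately have "solves_transport \<Omega> \<sigma> n \<beta> \<gamma> (\<lambda>_. 0) (\<lambda>_. 0) \<psi>"
    unfolding solves_transport_def W_space_def Hdiv_gminus_def by blast
  then show ?thesis unfolding \<psi>_def[abs_def] .
qed

end

theorem lemma3p1:
  fixes \<Omega> :: "'a::euclidean_space set"
    and \<sigma> :: "'a measure" and n :: "'a \<Rightarrow> 'a"
    and \<beta> :: "'a \<Rightarrow> 'a" and \<gamma> :: "'a \<Rightarrow> real"
    and bp :: "nat \<Rightarrow> 'a \<Rightarrow> 'a"
  assumes dim: "DIM('a) = 2 \<or> DIM('a) = 3"
    and dom: "polyhedral_domain \<Omega>" and lip: "lipschitz_boundary \<Omega>"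
    and sn: "surface_normal \<Omega> \<sigma> n"
    and gam: "Linfty \<Omega> \<gamma>"
    and beta: "C1_closure \<Omega> \<beta>"
    and A: "assumption_A \<Omega> \<sigma> n \<beta> \<gamma>"
    and beta_pos: "\<forall>x\<in>closure \<Omega>. norm (\<beta> x) > 0"
    and bp_meas: "\<forall>i\<in>{1..DIM('a) - 1}. bp i \<in> borel_measurable (lebesgue_on \<Omega>)"
    and bp_orth: "\<forall>x\<in>\<Omega>. \<forall>i\<in>{1..DIM('a) - 1}. \<beta> x \<bullet> bp i x = 0"
    and bp_onb: "\<forall>x\<in>\<Omega>. \<forall>i\<in>{1..DIM('a) - 1}. \<forall>j\<in>{1..DIM('a) - 1}.
                   bp i x \<bullet> bp j x = (if i = j then 1 else 0)"
  shows "(\<forall>\<tau> \<tau>'. Hdiv_0minus \<Omega> \<sigma> n \<beta> \<tau> \<and> Hdiv_0minus \<Omega> \<sigma> n \<beta> \<tau>' \<longrightarrow>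
             Hdiv_0minus \<Omega> \<sigma> n \<beta> (\<lambda>x. \<tau> x + \<tau>' x))
      \<and> (\<forall>c \<tau>. Hdiv_0minus \<Omega> \<sigma> n \<beta> \<tau> \<longrightarrow> Hdiv_0minus \<Omega> \<sigma> n \<beta> (\<lambda>x. c *\<^sub>R \<tau> x))
      \<and> (\<forall>\<tau>. Hdiv_0minus \<Omega> \<sigma> n \<beta> \<tau> \<longrightarrow>
             integrable (lebesgue_on \<Omega>)
               (\<lambda>x. (wdiv \<Omega> \<tau> x + (\<gamma> x / (norm (\<beta> x))\<^sup>2) * (\<beta> x \<bullet> \<tau> x))\<^sup>2)
           \<and> (\<forall>i\<in>{1..DIM('a) - 1}. integrable (lebesgue_on \<Omega>) (\<lambda>x. (\<tau> x \<bullet> bp i x)\<^sup>2)))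
      \<and> (\<forall>\<tau> \<tau>'. Hdiv_0minus \<Omega> \<sigma> n \<beta> \<tau> \<and> Hdiv_0minus \<Omega> \<sigma> n \<beta> \<tau>' \<longrightarrow>
             triple_norm1 \<Omega> \<beta> \<gamma> bp (\<lambda>x. \<tau> x + \<tau>' x)
               \<le> triple_norm1 \<Omega> \<beta> \<gamma> bp \<tau> + triple_norm1 \<Omega> \<beta> \<gamma> bp \<tau>')
      \<and> (\<forall>c \<tau>. Hdiv_0minus \<Omega> \<sigma> n \<beta> \<tau> \<longrightarrow>
             triple_norm1 \<Omega> \<beta> \<gamma> bp (\<lambda>x. c *\<^sub>R \<tau> x) = \<bar>c\<bar> * triple_norm1 \<Omega> \<beta> \<gamma> bp \<tau>)
      \<and> (\<forall>\<tau>. Hdiv_0minus \<Omega> \<sigma> n \<beta> \<tau> \<and> triple_norm1 \<Omega> \<beta> \<gamma> bp \<tau> = 0 \<longrightarrow>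
             (AE x in lebesgue_on \<Omega>. \<tau> x = 0))"
proof -
  have op: "open \<Omega>" and bd: "bounded \<Omega>"
    using dom unfolding polyhedral_domain_def by auto
  interpret triple_norm1_setting \<Omega> \<beta> \<gamma> bp
    using op bd beta beta_pos gam bp_meas bp_orth bp_onb
    unfolding C1_closure_def by unfold_locales auto
  have Hdiv: "Hdiv \<Omega> \<tau>" if "Hdiv_0minus \<Omega> \<sigma> n \<beta> \<tau>" for \<tau>
    using that by (simp add: Hdiv_0minus_iff)
  have definite: "AE x in lebesgue_on \<Omega>. \<tau> x = 0"
    if H: "Hdiv_0minus \<Omega> \<sigma> n \<beta> \<tau>" and z: "triple_norm1 \<Omega> \<beta> \<gamma> bp \<tau> = 0" for \<tau>
  proof -
    have "AE x in lebesgue_on \<Omega>. (\<beta> x \<bullet> \<tau> x) / (norm (\<beta> x))\<^sup>2 = 0"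
      by (rule assumption_A_homogeneous_unique[OF A op bd triple_norm1_eq_0_imp_solves_transport[OF H z]])
    with triple_norm1_eq_0_imp_parallel[OF Hdiv[OF H] z] show ?thesis
      by eventually_elim simp
  qed
  show ?thesis
    by (intro conjI allI impI ballI integrable_triple_norm1_terms[OF Hdiv]; (elim conjE)?)
       (simp_all add: Hdiv_0minus_add[OF op bd] Hdiv_0minus_scaleR[OF op bd] Hdiv definite
         triple_norm1_add_le triple_norm1_scaleR)
qed

end
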